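(* Let $\lambda=\lambda(n)=\Theta(\log n)$ with $\lambda\in[1..n]$ and $k=k(n)=\Theta(\lambda\log n)$ a positive integer. Consider the online algorithm selection procedure that maximizes $\mathrm{OneMax}$ on $\{0,1\}^n$ by starting from a uniformly random search point and running the $(1+1)$ EA until, for the first time, $k$ consecutive iterations of the $(1+1)$ EA fail to create an offspring strictly better than the current individual; at that moment it switches (irrevocably) to the $(1+(\lambda,\lambda))$ GA with population size $\lambda$, initialized with the current individual, and runs it until the optimum is found. Then the expected number of fitness evaluations until the optimum $1^n$ is found is $O(n\log\log n)$.
   Context: $\mathrm{OneMax}(x)=\sum_{i=1}^n x_i$, optimum $1^n$. The $(1+1)$ EA keeps one individual $x$; each iteration creates one offspring by flipping each bit independently with probability $1/n$ and replaces $x$ by it if its fitness is at least $f(x)$; cost 1 evaluation. The $(1+(\lambda,\lambda))$ GA with parameter $\lambda\in[1..n]$ keeps one individual $x$; each iteration: sample $\ell\sim\mathrm{Bin}(n,\lambda/n)$, create $\lambda$ offspring each by flipping exactly $\ell$ uniformly random distinct positions of $x$, let $x'$ be a best one (ties uniformly at random); then create $\lambda$ offspring each taking independently per position the bit of $x'$ with probability $1/\lambda$ and of $x$ otherwise; let $y$ be a best one; set $x\gets y$ if $f(y)\ge f(x)$. Cost $2\lambda$ evaluations per iteration. *)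

theory Defs
  imports "HOL-Probability.Probability" "HOL-Library.Landau_Symbols"
begin

(* A search point x in {0,1}^n is represented by the set of positions i < n with x_i = 1.
   OneMax(x) = number of one-bits; the optimum 1^n is {..<n}. *)

definition onemax :: "nat set \<Rightarrow> nat" where
  "onemax x = card x"

definition flip :: "nat set \<Rightarrow> nat set \<Rightarrow> nat set" where
  "flip x F = (x - F) \<union> (F - x)"

definition ea_mutation :: "nat \<Rightarrow> nat set \<Rightarrow> nat set pmf" where
  "ea_mutation n x =
     map_pmf (\<lambda>b. flip x {i. i < n \<and> b i})
       (Pi_pmf {..<n} False (\<lambda>_. bernoulli_pmf (1 / real n)))"

definition best_of :: "nat \<Rightarrow> (nat \<Rightarrow> nat set) \<Rightarrow> nat set pmf" where
  "best_of lam off =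
     (let M = Max ((\<lambda>j. onemax (off j)) ` {..<lam})
      in map_pmf off (pmf_of_set {j. j < lam \<and> onemax (off j) = M}))"

definition ga_iteration :: "nat \<Rightarrow> nat \<Rightarrow> nat set \<Rightarrow> nat set pmf" where
  "ga_iteration n lam x =
     bind_pmf (binomial_pmf n (real lam / real n)) (\<lambda>l.
     bind_pmf (Pi_pmf {..<lam} {}
                 (\<lambda>_. map_pmf (flip x) (pmf_of_set {F. F \<subseteq> {..<n} \<and> card F = l}))) (\<lambda>offs.
     bind_pmf (best_of lam offs) (\<lambda>x'.
     bind_pmf (Pi_pmf ({..<lam} \<times> {..<n}) False (\<lambda>_. bernoulli_pmf (1 / real lam))) (\<lambda>cs.
     bind_pmf (best_of lam (\<lambda>j. {i. i < n \<and> (if cs (j, i) then i \<in> x' else i \<in> x)})) (\<lambda>y.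
     return_pmf (if onemax y \<ge> onemax x then y else x))))))"

(* state of the combined algorithm: (1+1) EA with current individual and the number of
   consecutive non-improving iterations so far, or the (1+(lambda,lambda)) GA *)
datatype state = EA "nat set" nat | GA "nat set"

fun cur :: "state \<Rightarrow> nat set" where
  "cur (EA x c) = x"
| "cur (GA x) = x"

definition ea_step :: "nat \<Rightarrow> nat \<Rightarrow> nat set \<Rightarrow> nat \<Rightarrow> state pmf" where
  "ea_step n k x c =
     map_pmf (\<lambda>y.
        if onemax y > onemax x then EA y 0
        else (let x' = (if onemax y \<ge> onemax x then y else x)
              in if Suc c \<ge> k then GA x' else EA x' (Suc c)))
       (ea_mutation n x)"

(* one iteration; the optimum is absorbing (the run has stopped) *)
definition step :: "nat \<Rightarrow> nat \<Rightarrow> nat \<Rightarrow> state \<Rightarrow> state pmf" where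
  "step n lam k s =
     (if cur s = {..<n} then return_pmf s
      else (case s of EA x c \<Rightarrow> ea_step n k x c
                    | GA x \<Rightarrow> map_pmf GA (ga_iteration n lam x)))"

definition cost :: "nat \<Rightarrow> nat \<Rightarrow> state \<Rightarrow> nat" where
  "cost n lam s =
     (if cur s = {..<n} then 0
      else (case s of EA _ _ \<Rightarrow> 1 | GA _ \<Rightarrow> 2 * lam))"

definition init :: "nat \<Rightarrow> state pmf" where
  "init n = map_pmf (\<lambda>x. EA x 0) (pmf_of_set (Pow {..<n}))"

primrec dist :: "nat \<Rightarrow> nat \<Rightarrow> nat \<Rightarrow> nat \<Rightarrow> state pmf" where
  "dist n lam k 0 = init n"
| "dist n lam k (Suc t) = bind_pmf (dist n lam k t) (step n lam k)"

(* expected number of fitness evaluations until the optimum is found: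
   1 for evaluating the initial point, plus the expected cost of all iterations *)
definition expected_evals :: "nat \<Rightarrow> nat \<Rightarrow> nat \<Rightarrow> ennreal" where
  "expected_evals n lam k =
     1 + (\<Sum>t. \<integral>\<^sup>+ s. ennreal (real (cost n lam s)) \<partial>measure_pmf (dist n lam k t))"

end

theory Submission
  imports Defs "HOL-Analysis.Harmonic_Numbers" "HOL-Real_Asymp.Real_Asymp"
begin

text \<open>Both phases are analysed with potentials: functions of the state of the algorithm that drop in
  expectation by at least the cost of every iteration, so that the expected total cost is bounded
  by the expected initial potential.

  In the GA phase with \<open>d\<close> zero-bits, an iteration succeeds with probability
  \<open>\<Omega>(min 1 (d \<lambda>\<^sup>2 / n))\<close>: some mutant flips a zero-bit, and the crossover takes over that bit but none
  of the one-bits the mutant destroyed. Hence the GA needs \<open>O(\<lambda> d + (n / \<lambda>) log n)\<close> further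
  evaluations. The EA leaves a level with \<open>d\<close> zero-bits with probability at least \<open>d / (e n)\<close>, so
  it gives up on that level, and switches, with probability at most \<open>(1 - d / (e n))\<^sup>k\<close>. As
  \<open>k = \<Theta>(log\<^sup>2 n)\<close>, the switch happens with non-negligible probability only at
  \<open>d = O(n log n / k) = O(n / \<lambda>)\<close>, where the GA needs \<open>O(n)\<close> evaluations, while the EA spends at
  most \<open>min (e n / d) k\<close> evaluations per level, \<open>O(n log k) = O(n log log n)\<close> in total.\<close>

section \<open>Expected cost via potential functions\<close>

lemma total_cost_le_potential:
  fixes D :: "nat \<Rightarrow> 'a pmf" and K :: "'a \<Rightarrow> 'a pmf" and c \<Phi> :: "'a \<Rightarrow> ennreal"
  assumes D_Suc: "\<And>t. D (Suc t) = D t \<bind> K"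
    and closed: "\<And>s. s \<in> S \<Longrightarrow> set_pmf (K s) \<subseteq> S" and start: "set_pmf (D 0) \<subseteq> S"
    and drift: "\<And>s. s \<in> S \<Longrightarrow> c s + (\<integral>\<^sup>+s'. \<Phi> s' \<partial>K s) \<le> \<Phi> s"
  shows "(\<Sum>t. \<integral>\<^sup>+s. c s \<partial>D t) \<le> (\<integral>\<^sup>+s. \<Phi> s \<partial>D 0)"
proof -
  have support: "set_pmf (D t) \<subseteq> S" for t
    by (induction t) (use start closed in \<open>auto simp: D_Suc\<close>)
  have partial: "(\<Sum>t<T. \<integral>\<^sup>+s. c s \<partial>D t) + (\<integral>\<^sup>+s. \<Phi> s \<partial>D T) \<le> (\<integral>\<^sup>+s. \<Phi> s \<partial>D 0)" for T
  proof (induction T)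
    case (Suc T)
    have "(\<integral>\<^sup>+s. c s \<partial>D T) + (\<integral>\<^sup>+s. \<Phi> s \<partial>D (Suc T))
        = (\<integral>\<^sup>+s. c s + (\<integral>\<^sup>+s'. \<Phi> s' \<partial>K s) \<partial>D T)"
      by (simp add: D_Suc nn_integral_bind_pmf nn_integral_add)
    also have "\<dots> \<le> (\<integral>\<^sup>+s. \<Phi> s \<partial>D T)"
      by (intro nn_integral_mono_AE) (use support drift in \<open>auto simp: AE_measure_pmf_iff\<close>)
    finally show ?case
      using Suc.IH by (simp add: add.assoc) (metis add_left_mono order_trans)
  qed simp
  show ?thesis
    unfolding suminf_eq_SUP
  proof (rule SUP_least)
    fix T
    show "(\<Sum>t<T. \<integral>\<^sup>+s. c s \<partial>D t) \<le> (\<integral>\<^sup>+s. \<Phi> s \<partial>D 0)"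
      using partial[of T] by (rule order_trans[rotated]) simp
  qed
qed

lemma nn_integral_le_two_valued:
  fixes M :: "'a pmf" and f :: "'a \<Rightarrow> ennreal"
  assumes le: "\<And>x. x \<in> set_pmf M \<Longrightarrow> f x \<le> ennreal (if P x then A else B)"
    and "0 \<le> A" "0 \<le> B"
  shows "(\<integral>\<^sup>+x. f x \<partial>M) \<le> ennreal (A * measure_pmf.prob M {x. P x} + B * (1 - measure_pmf.prob M {x. P x}))"
proof -
  have "(\<integral>\<^sup>+x. f x \<partial>M) \<le> (\<integral>\<^sup>+x. ennreal (B + (A - B) * indicator {x. P x} x) \<partial>M)"
    by (intro nn_integral_mono_AE) (use le in \<open>fastforce simp: AE_measure_pmf_iff indicator_def\<close>)
  also have "\<dots> = ennreal (\<integral>x. B + (A - B) * indicator {x. P x} x \<partial>M)"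
    by (intro nn_integral_eq_integral measure_pmf.integrable_const_bound[where B="\<bar>A\<bar> + 2 * \<bar>B\<bar>"])
       (use assms(2,3) in \<open>auto simp: indicator_def\<close>)
  also have "(\<integral>x. B + (A - B) * indicator {x. P x} x \<partial>M) = B + (A - B) * measure_pmf.prob M {x. P x}"
    by (subst Bochner_Integration.integral_add) (auto simp: measure_pmf.emeasure_eq_measure)
  finally show ?thesis
    by (simp add: algebra_simps)
qed

lemma measure_bind_pmf_ge:
  assumes "\<And>a. a \<in> set_pmf M \<Longrightarrow> a \<in> A \<Longrightarrow> c \<le> measure_pmf.prob (f a) E" and "0 \<le> c"
  shows "c * measure_pmf.prob M A \<le> measure_pmf.prob (bind_pmf M f) E"
proof -
  have "ennreal (c * measure_pmf.prob M A) = (\<integral>\<^sup>+a. ennreal c * indicator A a \<partial>M)"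
    using assms(2) by (simp add: nn_integral_cmult measure_pmf.emeasure_eq_measure ennreal_mult)
  also have "\<dots> \<le> (\<integral>\<^sup>+a. emeasure (f a) E \<partial>M)"
    by (intro nn_integral_mono_AE)
       (use assms(1) in \<open>auto simp: AE_measure_pmf_iff indicator_def measure_pmf.emeasure_eq_measure\<close>)
  also have "\<dots> = emeasure (bind_pmf M f) E"
    by simp
  finally show ?thesis
    by (simp add: measure_pmf.emeasure_eq_measure ennreal_le_iff)
qed

lemma measure_pmf_eq_1_if_set_pmf_subset:
  "set_pmf M \<subseteq> E \<Longrightarrow> measure_pmf.prob M E = 1"
  using measure_pmf.prob_eq_1[of E M] by (auto simp: AE_measure_pmf_iff)

section \<open>Elementary estimates\<close>

lemma one_minus_power_le_exp:
  fixes x :: real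
  assumes "0 \<le> x" "x \<le> 1"
  shows "(1 - x) ^ m \<le> exp (- x * real m)"
proof -
  have "(1 - x) ^ m \<le> exp (- x) ^ m"
    using assms exp_ge_add_one_self[of "- x"] by (intro power_mono) auto
  then show ?thesis
    by (simp add: exp_of_nat_mult[symmetric] mult.commute)
qed

lemma exp_neg_one_le_one_minus_inverse_power:
  assumes "1 \<le> n"
  shows "exp (- 1) \<le> (1 - 1 / real n) ^ (n - 1)"
proof (cases "n = 1")
  case False
  define m where "m = n - 1"
  have m: "1 \<le> m" "n = m + 1"
    using assms False by (auto simp: m_def)
  have "(1 + 1 / real m) ^ m \<le> exp (1 / real m) ^ m"
    using exp_ge_add_one_self[of "1 / real m"] by (intro power_mono) (auto simp: add.commute)
  also have "\<dots> = exp 1"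
    using m by (simp flip: exp_of_nat_mult)
  finally have "inverse (exp 1) \<le> inverse ((1 + 1 / real m) ^ m)"
    by (intro le_imp_inverse_le) (auto intro!: zero_less_power add_pos_nonneg)
  also have "inverse ((1 + 1 / real m) ^ m) = (1 - 1 / real n) ^ (n - 1)"
    using m by (simp add: power_inverse field_simps)
  finally show ?thesis
    by (simp add: exp_minus)
qed simp

lemma one_minus_exp_neg_ge:
  fixes a :: real
  assumes "0 \<le> a"
  shows "a / (1 + a) \<le> 1 - exp (- a)"
proof -
  have "exp (- a) \<le> 1 / (1 + a)"
    using assms exp_ge_add_one_self[of a] by (simp add: exp_minus field_simps)
  then show ?thesis
    using assms by (simp add: field_simps)
qed

lemma binomial_ratio_le_power:
  assumes "m \<le> n"
  shows "real (m choose l) / real (n choose l) \<le> (real m / real n) ^ l"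
proof (induction l)
  case (Suc l)
  show ?case
  proof (cases "Suc l \<le> n")
    case True
    have absorb: "real (N choose Suc l) = real (N - l) * real (N choose l) / real (Suc l)" for N
    proof -
      have "Suc l * (N choose Suc l) = (N - l) * (N choose l)"
        using binomial_absorption[of l N] binomial_absorb_comp[of N l] by simp
      then show ?thesis
        by (simp add: field_simps flip: of_nat_mult)
    qed
    have "real (m - l) / real (n - l) \<le> real m / real n"
      using True assms by (cases "l \<le> m") (auto simp: field_simps of_nat_diff mult_left_mono)
    then have "real (m choose l) / real (n choose l) * (real (m - l) / real (n - l))
        \<le> (real m / real n) ^ l * (real m / real n)"
      using Suc.IH by (intro mult_mono) auto
    moreover have "real (m choose Suc l) / real (n choose Suc l)
        = real (m choose l) / real (n choose l) * (real (m - l) / real (n - l))"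
    proof -
      have cancel: "(c * a / s) / (d * b / s) = (a / b) * (c / d)" if "s > 0" "b > 0" "d > 0"
        for a b c d s :: real
        using that by (simp add: field_simps)
      show ?thesis
        unfolding absorb[of m] absorb[of n] by (rule cancel) (use True in auto)
    qed
    ultimately show ?thesis
      by (simp add: mult.commute)
  qed (simp add: binomial_eq_0)
qed simp

lemma harm_le_one_plus_ln:
  assumes "1 \<le> n"
  shows "harm n \<le> 1 + ln (real n)"
  using euler_mascheroni_sequence_decreasing[of 1 n] assms by (simp add: harm_def)

lemma harm_diff_le_ln_diff:
  assumes "0 < m" "m \<le> n"
  shows "harm n - harm m \<le> ln (real n) - ln (real m)"
  using euler_mascheroni_sequence_decreasing[OF assms] by simp

lemma expectation_binomial_pmf_Suc:
  fixes g :: "nat \<Rightarrow> real"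
  assumes p: "p \<in> {0..1}"
  shows "measure_pmf.expectation (binomial_pmf (Suc n) p) g =
         p * measure_pmf.expectation (binomial_pmf n p) (\<lambda>k. g (Suc k))
         + (1 - p) * measure_pmf.expectation (binomial_pmf n p) g"
proof -
  have "binomial_pmf (Suc n) p =
      bernoulli_pmf p \<bind> (\<lambda>b. map_pmf (\<lambda>k. (if b then 1 else 0) + k) (binomial_pmf n p))"
    using p by (simp add: binomial_pmf_Suc map_pmf_def)
  also have "measure_pmf.expectation \<dots> g = (\<Sum>b\<in>UNIV. pmf (bernoulli_pmf p) b *\<^sub>R
      measure_pmf.expectation (map_pmf (\<lambda>k. (if b then 1 else 0) + k) (binomial_pmf n p)) g)"
    by (rule pmf_expectation_bind) (use p in \<open>auto intro!: finite_imageI\<close>)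
  finally show ?thesis
    using p by (simp add: UNIV_bool)
qed

lemma binomial_pmf_moments:
  assumes p: "p \<in> {0..1}"
  shows "measure_pmf.expectation (binomial_pmf n p) real = n * p \<and>
         measure_pmf.expectation (binomial_pmf n p) (\<lambda>k. (real k)\<^sup>2) = n * p + n * (real n - 1) * p\<^sup>2"
proof (induction n)
  case 0
  then show ?case
    using p by (simp add: binomial_pmf_0)
next
  case (Suc n)
  have "(\<lambda>k. (real (Suc k))\<^sup>2) = (\<lambda>k. 1 + (2 * real k + (real k)\<^sup>2))"
    by (auto simp: power2_eq_square algebra_simps)
  then have shifted: "measure_pmf.expectation (binomial_pmf n p) (\<lambda>k. real (Suc k)) = 1 + n * p"
      "measure_pmf.expectation (binomial_pmf n p) (\<lambda>k. (real (Suc k))\<^sup>2)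
         = 1 + 2 * (n * p) + (n * p + n * (real n - 1) * p\<^sup>2)"
    using Suc.IH p by (simp_all add: Bochner_Integration.integral_add)
  show ?case
    using expectation_binomial_pmf_Suc[OF p, of n real] expectation_binomial_pmf_Suc[OF p, of n "\<lambda>k. (real k)\<^sup>2"]
      shifted Suc.IH
    by (cases n) (simp_all add: algebra_simps power2_eq_square)
qed

lemma binomial_pmf_concentration:
  assumes p: "p \<in> {0..1}" and large: "8 \<le> real n * p"
  shows "1 / 2 \<le> measure_pmf.prob (binomial_pmf n p) {l. \<bar>real l - real n * p\<bar> < real n * p / 2}"
proof -
  define B where "B = binomial_pmf n p"
  have mean: "measure_pmf.expectation B real = real n * p"
    using binomial_pmf_moments[OF p] by (simp add: B_def)
  have "measure_pmf.variance B real = real n * p * (1 - p)"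
    using binomial_pmf_moments[OF p, of n] p
    by (subst measure_pmf.variance_eq) (auto simp: B_def power2_eq_square algebra_simps)
  also have "\<dots> \<le> real n * p"
    using p by (simp add: mult_left_le)
  finally have var: "measure_pmf.variance B real \<le> real n * p" .
  have "measure_pmf.prob B {l. real n * p / 2 \<le> \<bar>real l - real n * p\<bar>}
      \<le> measure_pmf.variance B real / (real n * p / 2)\<^sup>2"
    using measure_pmf.Chebyshev_inequality[where M=B and f=real and a="real n * p / 2"] large p
    by (simp add: mean[unfolded B_def] B_def)
  also have "\<dots> \<le> real n * p / (real n * p / 2)\<^sup>2"
    by (intro divide_right_mono var) auto
  also have "\<dots> \<le> 1 / 2"
    using large by (simp add: power2_eq_square field_simps)
  finally have "measure_pmf.prob B {l. real n * p / 2 \<le> \<bar>real l - real n * p\<bar>} \<le> 1 / 2" .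
  moreover have "measure_pmf.prob B {l. \<bar>real l - real n * p\<bar> < real n * p / 2}
      = 1 - measure_pmf.prob B {l. real n * p / 2 \<le> \<bar>real l - real n * p\<bar>}"
    by (subst measure_pmf.prob_compl[symmetric]) (auto intro!: arg_cong[where f="measure_pmf.prob B"])
  ultimately show ?thesis
    by (simp add: B_def)
qed

section \<open>Improvement probabilities\<close>

lemma onemax_flip:
  assumes "finite x" "finite F"
  shows "int (onemax (flip x F)) = int (onemax x) + int (card F) - 2 * int (card (F \<inter> x))"
proof -
  have "card (flip x F) = card (x - F) + card (F - x)"
    unfolding flip_def using assms by (intro card_Un_disjoint) auto
  moreover have "card (x - F) = card x - card (F \<inter> x)" "card (F - x) = card F - card (F \<inter> x)"
    using assms by (simp_all add: card_Diff_subset_Int Int_commute)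
  moreover have "card (F \<inter> x) \<le> card x" "card (F \<inter> x) \<le> card F"
    using assms by (auto intro: card_mono)
  ultimately show ?thesis
    by (simp add: onemax_def of_nat_diff)
qed

lemma onemax_flip_singleton:
  assumes "finite x" "z \<notin> x"
  shows "onemax (flip x {z}) = Suc (onemax x)"
proof -
  have "flip x {z} = insert z x"
    using assms by (auto simp: flip_def)
  then show ?thesis
    using assms by (simp add: onemax_def)
qed

lemma set_pmf_best_of:
  assumes "1 \<le> L" and y: "y \<in> set_pmf (best_of L off)"
  shows "\<exists>j<L. y = off j" and "\<And>j. j < L \<Longrightarrow> onemax (off j) \<le> onemax y"
proof -
  define M where "M = Max ((\<lambda>j. onemax (off j)) ` {..<L})"
  define J where "J = {j. j < L \<and> onemax (off j) = M}"
  have "M \<in> (\<lambda>j. onemax (off j)) ` {..<L}"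
    unfolding M_def using assms(1) by (intro Max_in) (auto simp: lessThan_empty_iff)
  then have "J \<noteq> {}"
    by (auto simp: J_def)
  then have "set_pmf (best_of L off) = off ` J"
    unfolding best_of_def Let_def M_def[symmetric] J_def[symmetric] by (simp add: J_def)
  with y obtain j where "j \<in> J" "y = off j"
    by auto
  moreover have "onemax (off j') \<le> M" if "j' < L" for j'
    unfolding M_def using that by (intro Max_ge) auto
  ultimately show "\<exists>j<L. y = off j" "\<And>j. j < L \<Longrightarrow> onemax (off j) \<le> onemax y"
    by (auto simp: J_def)
qed

lemma set_pmf_ea_mutation:
  "x \<subseteq> {..<n} \<Longrightarrow> y \<in> set_pmf (ea_mutation n x) \<Longrightarrow> y \<subseteq> {..<n}"
  by (auto simp: ea_mutation_def flip_def)

lemma prob_only_bit_flipped: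
  assumes "z < n"
  shows "measure_pmf.prob (Pi_pmf {..<n} False (\<lambda>_. bernoulli_pmf (1 / real n)))
           (Pi {..<n} (\<lambda>i. if i = z then {True} else {False})) = 1 / real n * (1 - 1 / real n) ^ (n - 1)"
proof -
  have "measure_pmf.prob (Pi_pmf {..<n} False (\<lambda>_. bernoulli_pmf (1 / real n)))
      (Pi {..<n} (\<lambda>i. if i = z then {True} else {False})) = (\<Prod>i<n. if i = z then 1 / real n else 1 - 1 / real n)"
    using assms by (subst measure_Pi_pmf_Pi) (auto intro!: prod.cong simp: measure_pmf_single)
  also have "\<dots> = 1 / real n * (1 - 1 / real n) ^ (n - 1)"
  proof -
    have "{i. i < n \<and> i \<noteq> z} = {..<n} - {z}"
      by auto
    then have "{i. i = z \<and> i < n} = {z}" "card {i. i < n \<and> i \<noteq> z} = n - 1"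
      using assms by auto
    then show ?thesis
      by (simp add: prod.If_cases Int_def lessThan_def)
  qed
  finally show ?thesis .
qed

text \<open>Already the mutations flipping exactly one zero-bit, and nothing else, have this probability.\<close>

lemma ea_mutation_improves:
  assumes x: "x \<subseteq> {..<n}" and n: "1 \<le> n"
  shows "real (n - onemax x) / (exp 1 * real n)
           \<le> measure_pmf.prob (ea_mutation n x) {y. onemax x < onemax y}"
proof -
  define P where "P = Pi_pmf {..<n} False (\<lambda>_. bernoulli_pmf (1 / real n))"
  define only where "only z = Pi {..<n} (\<lambda>i. if i = z then {True} else {False})" for z
  have fin: "finite x"
    using x finite_subset by blast
  have only_improves: "(\<Union>z\<in>{..<n} - x. only z)
      \<subseteq> (\<lambda>b. flip x {i. i < n \<and> b i}) -` {y. onemax x < onemax y}"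
  proof
    fix b assume "b \<in> (\<Union>z\<in>{..<n} - x. only z)"
    then obtain z where z: "z < n" "z \<notin> x" "b \<in> only z"
      by blast
    then have "{i. i < n \<and> b i} = {z}"
      by (auto simp: only_def Pi_def split: if_splits)
    then show "b \<in> (\<lambda>b. flip x {i. i < n \<and> b i}) -` {y. onemax x < onemax y}"
      using onemax_flip_singleton[OF fin z(2)] by simp
  qed
  have "real (n - onemax x) / (exp 1 * real n) = real (n - card x) * (1 / real n * exp (- 1))"
    by (simp add: onemax_def exp_minus field_simps)
  also have "\<dots> \<le> real (n - card x) * (1 / real n * (1 - 1 / real n) ^ (n - 1))"
    using exp_neg_one_le_one_minus_inverse_power[OF n] by (intro mult_left_mono) auto
  also have "\<dots> = (\<Sum>z\<in>{..<n} - x. measure_pmf.prob P (only z))"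
    using x fin by (simp add: P_def only_def prob_only_bit_flipped card_Diff_subset)
  also have "\<dots> = measure_pmf.prob P (\<Union>z\<in>{..<n} - x. only z)"
    by (rule measure_pmf.finite_measure_finite_Union[symmetric]) (auto simp: disjoint_family_on_def only_def Pi_def)
  also have "\<dots> \<le> measure_pmf.prob (ea_mutation n x) {y. onemax x < onemax y}"
    unfolding ea_mutation_def P_def[symmetric]
    using measure_pmf.finite_measure_mono[OF only_improves] by simp
  finally show ?thesis .
qed

definition mutation_phase :: "nat \<Rightarrow> nat \<Rightarrow> nat set \<Rightarrow> nat \<Rightarrow> nat set pmf" where
  "mutation_phase n lam x l =
     bind_pmf (Pi_pmf {..<lam} {} (\<lambda>_. map_pmf (flip x) (pmf_of_set {F. F \<subseteq> {..<n} \<and> card F = l})))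
       (best_of lam)"

definition crossover_phase :: "nat \<Rightarrow> nat \<Rightarrow> nat set \<Rightarrow> nat set \<Rightarrow> nat set pmf" where
  "crossover_phase n lam x x' =
     bind_pmf (Pi_pmf ({..<lam} \<times> {..<n}) False (\<lambda>_. bernoulli_pmf (1 / real lam))) (\<lambda>cs.
     bind_pmf (best_of lam (\<lambda>j. {i. i < n \<and> (if cs (j, i) then i \<in> x' else i \<in> x)})) (\<lambda>y.
     return_pmf (if onemax y \<ge> onemax x then y else x)))"

lemma ga_iteration_eq_phases:
  "ga_iteration n lam x =
     bind_pmf (binomial_pmf n (real lam / real n))
       (\<lambda>l. bind_pmf (mutation_phase n lam x l) (crossover_phase n lam x))"
  unfolding ga_iteration_def mutation_phase_def crossover_phase_def by (simp add: bind_assoc_pmf)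

lemma set_pmf_ga_iteration:
  assumes "1 \<le> lam" "x \<subseteq> {..<n}" and r: "r \<in> set_pmf (ga_iteration n lam x)"
  shows "r \<subseteq> {..<n}" and "onemax x \<le> onemax r"
proof -
  from r obtain x' cs y where y: "y \<in> set_pmf (best_of lam (\<lambda>j. {i. i < n \<and> (if cs (j, i) then i \<in> x' else i \<in> x)}))"
    and r_eq: "r = (if onemax y \<ge> onemax x then y else x)"
    unfolding ga_iteration_def by auto
  have "y \<subseteq> {..<n}"
    using set_pmf_best_of(1)[OF assms(1) y] by auto
  then show "r \<subseteq> {..<n}" "onemax x \<le> onemax r"
    using r_eq assms(2) by auto
qed

lemma flip_uniform_misses_zeros:
  assumes x: "x \<subseteq> {..<n}" and "l \<le> n" "1 \<le> n"
  shows "measure_pmf.prob (map_pmf (flip x) (pmf_of_set {F. F \<subseteq> {..<n} \<and> card F = l}))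
           {y. y \<inter> ({..<n} - x) = {}} \<le> (1 - real (n - onemax x) / real n) ^ l"
proof -
  define S where "S = {F. F \<subseteq> {..<n} \<and> card F = l}"
  have fin: "finite x"
    using x finite_subset by blast
  have card_x: "card x \<le> n"
    using card_mono[OF _ x] by simp
  have "finite S" "S \<noteq> {}"
    unfolding S_def using assms(2) by (auto intro!: finite_subset[of _ "Pow {..<n}"] exI[of _ "{..<l}"])
  moreover have "S \<inter> {F. flip x F \<inter> ({..<n} - x) = {}} = {F. F \<subseteq> x \<and> card F = l}"
    using x by (auto simp: S_def flip_def)
  moreover have "card S = n choose l"
    unfolding S_def using n_subsets[of "{..<n}" l] by simp
  ultimately have "measure_pmf.prob (map_pmf (flip x) (pmf_of_set S)) {y. y \<inter> ({..<n} - x) = {}}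
      = real (card {F. F \<subseteq> x \<and> card F = l}) / real (n choose l)"
    by (simp add: measure_pmf_of_set)
  also have "\<dots> = real (card x choose l) / real (n choose l)"
    by (simp add: n_subsets[OF fin])
  also have "\<dots> \<le> (real (card x) / real n) ^ l"
    by (rule binomial_ratio_le_power[OF card_x])
  also have "real (card x) / real n = 1 - real (n - onemax x) / real n"
    using assms card_x by (simp add: onemax_def of_nat_diff field_simps)
  finally show ?thesis
    by (simp add: S_def)
qed

lemma some_mutant_flips_zero:
  assumes "x \<subseteq> {..<n}" "l \<le> n" "1 \<le> n"
  shows "1 - (1 - real (n - onemax x) / real n) ^ (l * L)
           \<le> measure_pmf.prob (Pi_pmf {..<L} {} (\<lambda>_. map_pmf (flip x) (pmf_of_set {F. F \<subseteq> {..<n} \<and> card F = l})))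
                {offs. \<exists>j<L. offs j \<inter> ({..<n} - x) \<noteq> {}}"
proof -
  define Q where "Q = map_pmf (flip x) (pmf_of_set {F. F \<subseteq> {..<n} \<and> card F = l})"
  define miss where "miss = Pi {..<L} (\<lambda>_. {y. y \<inter> ({..<n} - x) = {}})"
  have "measure_pmf.prob (Pi_pmf {..<L} {} (\<lambda>_. Q)) miss = measure_pmf.prob Q {y. y \<inter> ({..<n} - x) = {}} ^ L"
    unfolding miss_def by (subst measure_Pi_pmf_Pi) auto
  also have "\<dots> \<le> ((1 - real (n - onemax x) / real n) ^ l) ^ L"
    unfolding Q_def using flip_uniform_misses_zeros[OF assms] by (intro power_mono) auto
  finally have "measure_pmf.prob (Pi_pmf {..<L} {} (\<lambda>_. Q)) miss \<le> (1 - real (n - onemax x) / real n) ^ (l * L)"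
    by (simp add: power_mult)
  moreover have "{offs. \<exists>j<L. offs j \<inter> ({..<n} - x) \<noteq> {}} = UNIV - miss"
    by (auto simp: miss_def Pi_def)
  ultimately show ?thesis
    using measure_pmf.prob_compl[of miss "Pi_pmf {..<L} {} (\<lambda>_. Q)"] by (simp add: Q_def)
qed

text \<open>All mutants flip exactly \<open>l\<close> bits, so one that flips only one-bits has the smallest possible
  fitness \<open>|x| - l\<close>: it cannot be selected while some mutant flips a zero-bit.\<close>

lemma best_mutant_flips_zero:
  assumes "1 \<le> L" and x: "x \<subseteq> {..<n}"
    and offs: "\<And>j. j < L \<Longrightarrow> \<exists>F. F \<subseteq> {..<n} \<and> card F = l \<and> offs j = flip x F"
    and hit: "\<exists>j<L. offs j \<inter> ({..<n} - x) \<noteq> {}"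
    and x': "x' \<in> set_pmf (best_of L offs)"
  shows "\<exists>F. F \<subseteq> {..<n} \<and> card F = l \<and> x' = flip x F \<and> F - x \<noteq> {}"
proof -
  have fin: "finite x" "finite F" if "F \<subseteq> {..<n}" for F
    using x that finite_subset by blast+
  obtain j0 where j0: "j0 < L" "x' = offs j0"
    using set_pmf_best_of(1)[OF assms(1) x'] by blast
  obtain F0 where F0: "F0 \<subseteq> {..<n}" "card F0 = l" "offs j0 = flip x F0"
    using offs[OF j0(1)] by blast
  obtain j1 where j1: "j1 < L" "offs j1 \<inter> ({..<n} - x) \<noteq> {}"
    using hit by blast
  obtain F1 where F1: "F1 \<subseteq> {..<n}" "card F1 = l" "offs j1 = flip x F1"
    using offs[OF j1(1)] by blast
  have "F1 \<inter> x \<subset> F1"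
    using j1(2) F1 by (auto simp: flip_def)
  then have "card (F1 \<inter> x) < l"
    using F1 fin(2)[OF F1(1)] by (metis psubset_card_mono)
  moreover have "onemax (offs j1) \<le> onemax x'"
    using set_pmf_best_of(2)[OF assms(1) x' j1(1)] .
  ultimately have "F0 \<inter> x \<noteq> F0"
    using onemax_flip[OF fin[OF F0(1)]] onemax_flip[OF fin[OF F1(1)]] F0 F1 j0 by auto
  then show ?thesis
    using F0 j0 by blast
qed

lemma mutation_phase_flips_zero:
  assumes "x \<subseteq> {..<n}" "l \<le> n" "1 \<le> n" "1 \<le> L"
  shows "1 - (1 - real (n - onemax x) / real n) ^ (l * L)
           \<le> measure_pmf.prob (mutation_phase n L x l)
                {x'. \<exists>F. F \<subseteq> {..<n} \<and> card F = l \<and> x' = flip x F \<and> F - x \<noteq> {}}"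
proof -
  define S where "S = {F. F \<subseteq> {..<n} \<and> card F = l}"
  have "finite S" "S \<noteq> {}"
    unfolding S_def using assms(2) by (auto intro!: finite_subset[of _ "Pow {..<n}"] exI[of _ "{..<l}"])
  have offs: "\<exists>F. F \<subseteq> {..<n} \<and> card F = l \<and> offs j = flip x F"
    if "offs \<in> set_pmf (Pi_pmf {..<L} {} (\<lambda>_. map_pmf (flip x) (pmf_of_set S)))" "j < L" for offs j
  proof -
    have "offs j \<in> set_pmf (map_pmf (flip x) (pmf_of_set S))"
      using that by (auto simp: set_Pi_pmf PiE_dflt_def)
    then show ?thesis
      using \<open>finite S\<close> \<open>S \<noteq> {}\<close> by (auto simp: S_def)
  qed
  have "1 * measure_pmf.prob (Pi_pmf {..<L} {} (\<lambda>_. map_pmf (flip x) (pmf_of_set S)))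
           {offs. \<exists>j<L. offs j \<inter> ({..<n} - x) \<noteq> {}}
      \<le> measure_pmf.prob (mutation_phase n L x l)
           {x'. \<exists>F. F \<subseteq> {..<n} \<and> card F = l \<and> x' = flip x F \<and> F - x \<noteq> {}}"
    unfolding mutation_phase_def S_def[symmetric]
  proof (rule measure_bind_pmf_ge)
    fix offs
    assume sampled: "offs \<in> set_pmf (Pi_pmf {..<L} {} (\<lambda>_. map_pmf (flip x) (pmf_of_set S)))"
      and hit: "offs \<in> {offs. \<exists>j<L. offs j \<inter> ({..<n} - x) \<noteq> {}}"
    have "set_pmf (best_of L offs)
        \<subseteq> {x'. \<exists>F. F \<subseteq> {..<n} \<and> card F = l \<and> x' = flip x F \<and> F - x \<noteq> {}}"
      using best_mutant_flips_zero[where offs=offs, OF assms(4,1) offs[OF sampled]] hit by auto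
    then show "1 \<le> measure_pmf.prob (best_of L offs)
        {x'. \<exists>F. F \<subseteq> {..<n} \<and> card F = l \<and> x' = flip x F \<and> F - x \<noteq> {}}"
      by (simp add: measure_pmf_eq_1_if_set_pmf_subset)
  qed simp
  then show ?thesis
    using some_mutant_flips_zero[OF assms(1-3), of L] by (simp add: S_def)
qed

definition first_selecting_row :: "nat \<Rightarrow> nat \<Rightarrow> nat \<Rightarrow> nat set \<Rightarrow> nat \<Rightarrow> (nat \<times> nat \<Rightarrow> bool) set" where
  "first_selecting_row L n g B j = Pi ({..<L} \<times> {..<n}) (\<lambda>(a, i).
     if i = g then (if a < j then {False} else if a = j then {True} else UNIV)
     else if a = j \<and> i \<in> B then {False} else UNIV)"

lemma prob_first_selecting_row:
  assumes "j < L" "g < n" "g \<notin> B" "B \<subseteq> {..<n}" "0 \<le> q" "q \<le> 1"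
  shows "measure_pmf.prob (Pi_pmf ({..<L} \<times> {..<n}) False (\<lambda>_. bernoulli_pmf q)) (first_selecting_row L n g B j)
           = (1 - q) ^ j * (q * (1 - q) ^ card B)"
proof -
  define row where "row a = (\<Prod>i<n. if i = g then (if a < j then 1 - q else if a = j then q else 1)
                                     else if a = j \<and> i \<in> B then 1 - q else 1)" for a
  have "measure_pmf.prob (Pi_pmf ({..<L} \<times> {..<n}) False (\<lambda>_. bernoulli_pmf q)) (first_selecting_row L n g B j)
      = (\<Prod>(a, i)\<in>{..<L} \<times> {..<n}. if i = g then (if a < j then 1 - q else if a = j then q else 1)
                                     else if a = j \<and> i \<in> B then 1 - q else 1)"
    unfolding first_selecting_row_def using assms(5,6)
    by (subst measure_Pi_pmf_Pi) (auto intro!: prod.cong simp: measure_pmf_single)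
  also have "\<dots> = (\<Prod>a<L. row a)"
    unfolding row_def by (rule prod.cartesian_product[symmetric])
  also have "\<dots> = (\<Prod>a<L. (if a < j then 1 - q else 1) * (if a = j then q * (1 - q) ^ card B else 1))"
  proof (intro prod.cong refl)
    fix a
    have "row a = (\<Prod>i<n. (if i = g then (if a < j then 1 - q else if a = j then q else 1) else 1)
                       * (if a = j \<and> i \<in> B then 1 - q else 1))"
      unfolding row_def using assms(3) by (intro prod.cong) auto
    also have "\<dots> = (if a < j then 1 - q else if a = j then q else 1) * (if a = j then (1 - q) ^ card B else 1)"
    proof -
      have "{i. i < n \<and> i \<in> B} = B"
        using assms(4) by auto
      then show ?thesis
        using assms(2) by (simp add: prod.distrib prod.If_cases Int_def)
    qed
    finally show "row a = (if a < j then 1 - q else 1) * (if a = j then q * (1 - q) ^ card B else 1)"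
      by auto
  qed
  also have "\<dots> = (1 - q) ^ j * (q * (1 - q) ^ card B)"
  proof -
    have "{a. a < L \<and> a < j} = {..<j}"
      using assms(1) by auto
    then show ?thesis
      using assms(1) by (simp add: prod.distrib prod.If_cases Int_def)
  qed
  finally show ?thesis .
qed

lemma first_selecting_rowD:
  assumes "cs \<in> first_selecting_row L n g B j" "j < L" "g < n" "g \<notin> B" "B \<subseteq> {..<n}"
  shows "cs (j, g)" and "\<And>a. a < j \<Longrightarrow> \<not> cs (a, g)" and "\<And>i. i \<in> B \<Longrightarrow> \<not> cs (j, i)"
proof -
  have row: "cs (a, i) \<in> (if i = g then (if a < j then {False} else if a = j then {True} else UNIV)
                          else if a = j \<and> i \<in> B then {False} else UNIV)" if "a < L" "i < n" for a i
    using Pi_mem[OF assms(1)[unfolded first_selecting_row_def], of "(a, i)"] that by simp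
  show "cs (j, g)"
    using row[of j g] assms(2,3) by simp
  show "\<not> cs (a, g)" if "a < j" for a
    using row[of a g] that assms(2,3) by simp
  show "\<not> cs (j, i)" if "i \<in> B" for i
  proof -
    have "i < n" "i \<noteq> g"
      using that assms(4,5) by auto
    then show ?thesis
      using row[of j i] that assms(2) by simp
  qed
qed

lemma some_row_selects_prob:
  fixes n g :: nat
  assumes "g < n" "g \<notin> B" "B \<subseteq> {..<n}" "0 < q" "q \<le> 1"
  shows "(1 - q) ^ card B * (1 - (1 - q) ^ L)
           \<le> measure_pmf.prob (Pi_pmf ({..<L} \<times> {..<n}) False (\<lambda>_. bernoulli_pmf q))
                {cs. \<exists>j<L. cs (j, g) \<and> (\<forall>i\<in>B. \<not> cs (j, i))}"
proof -
  define P where "P = Pi_pmf ({..<L} \<times> {..<n}) False (\<lambda>_. bernoulli_pmf q)"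
  have row: "cs (j, g)" "\<And>a. a < j \<Longrightarrow> \<not> cs (a, g)" "\<And>i. i \<in> B \<Longrightarrow> \<not> cs (j, i)"
    if "cs \<in> first_selecting_row L n g B j" "j < L" for cs j
    using first_selecting_rowD[OF that assms(1-3)] by blast+
  have "disjoint_family_on (first_selecting_row L n g B) {..<L}"
    unfolding disjoint_family_on_def
  proof (intro ballI impI)
    fix j1 j2 assume "j1 \<in> {..<L}" "j2 \<in> {..<L}" "j1 \<noteq> j2"
    then show "first_selecting_row L n g B j1 \<inter> first_selecting_row L n g B j2 = {}"
      using row(1,2) by (metis disjoint_iff lessThan_iff linorder_neqE_nat)
  qed
  then have "measure_pmf.prob P (\<Union>j<L. first_selecting_row L n g B j)
      = (\<Sum>j<L. measure_pmf.prob P (first_selecting_row L n g B j))"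
    by (intro measure_pmf.finite_measure_finite_Union) auto
  also have "\<dots> = (\<Sum>j<L. (1 - q) ^ j) * (q * (1 - q) ^ card B)"
    unfolding P_def using assms by (simp add: prob_first_selecting_row sum_distrib_right)
  also have "\<dots> = (1 - q) ^ card B * (1 - (1 - q) ^ L)"
    using assms(4) by (simp add: sum_gp_strict field_simps)
  finally have "(1 - q) ^ card B * (1 - (1 - q) ^ L) = measure_pmf.prob P (\<Union>j<L. first_selecting_row L n g B j)" ..
  also have "\<dots> \<le> measure_pmf.prob P {cs. \<exists>j<L. cs (j, g) \<and> (\<forall>i\<in>B. \<not> cs (j, i))}"
    using row(1,3) by (intro measure_pmf.finite_measure_mono) (blast, simp)
  finally show ?thesis
    by (simp add: P_def)
qed

text \<open>\<open>\<kappa>\<close> bounds from below the probability that the crossover phase turns a mutant that flipped a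
  zero-bit into a strict improvement: the factor \<open>e\<^sup>-\<^sup>2 / 4 \<le> (1 - 1 / \<lambda>)\<^sup>2\<^sup>\<lambda>\<close> pays for taking over none
  of the at most \<open>2 \<lambda>\<close> one-bits destroyed by the mutant, the factor \<open>1 - e\<^sup>-\<^sup>1\<close> for some of the \<open>\<lambda>\<close>
  offspring taking over the zero-bit.\<close>

definition \<kappa> :: real where
  "\<kappa> = exp (- 2) / 4 * (1 - exp (- 1))"

lemma \<kappa>_pos: "0 < \<kappa>"
  unfolding \<kappa>_def by (simp add: exp_minus field_simps)

lemma \<kappa>_le_crossover_bound:
  assumes L: "2 \<le> L" and b: "b \<le> 2 * L"
  shows "\<kappa> \<le> (1 - 1 / real L) ^ b * (1 - (1 - 1 / real L) ^ L)"
proof -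
  define q where "q = 1 / real L"
  have q: "0 \<le> q" "q \<le> 1 / 2"
    using L by (auto simp: q_def)
  have "exp (- 1) ^ 2 * (1 / 2) ^ 2 \<le> ((1 - q) ^ (L - 1)) ^ 2 * (1 - q) ^ 2"
    using exp_neg_one_le_one_minus_inverse_power[of L] L q
    by (intro mult_mono power_mono) (auto simp: q_def)
  also have "\<dots> = (1 - q) ^ (2 * L)"
  proof -
    have "2 * L = (L - 1) * 2 + 2"
      using L by simp
    then show ?thesis
      by (simp only: power_add power_mult)
  qed
  also have "\<dots> \<le> (1 - q) ^ b"
    using b q by (intro power_decreasing) auto
  finally have "exp (- 2) / 4 \<le> (1 - q) ^ b"
    by (simp add: power2_eq_square flip: exp_add)
  moreover have "(1 - q) ^ L \<le> exp (- 1)"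
    using one_minus_power_le_exp[of q L] q L by (simp add: q_def)
  ultimately show ?thesis
    unfolding \<kappa>_def q_def[symmetric] using q by (intro mult_mono) auto
qed

lemma crossover_phase_improves:
  assumes x: "x \<subseteq> {..<n}" and F: "F \<subseteq> {..<n}" "g \<in> F" "g \<notin> x"
    and L: "2 \<le> L" and b: "card (F \<inter> x) \<le> 2 * L"
  shows "\<kappa> \<le> measure_pmf.prob (crossover_phase n L x (flip x F)) {r. onemax x < onemax r}"
proof -
  define P where "P = Pi_pmf ({..<L} \<times> {..<n}) False (\<lambda>_. bernoulli_pmf (1 / real L))"
  define child where "child cs j = {i. i < n \<and> (if cs (j, i) then i \<in> flip x F else i \<in> x)}"
    for cs and j :: nat
  have "\<kappa> \<le> (1 - 1 / real L) ^ card (F \<inter> x) * (1 - (1 - 1 / real L) ^ L)"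
    by (rule \<kappa>_le_crossover_bound[OF L b])
  also have "\<dots> \<le> measure_pmf.prob P {cs. \<exists>j<L. cs (j, g) \<and> (\<forall>i\<in>F \<inter> x. \<not> cs (j, i))}"
    unfolding P_def using F L by (intro some_row_selects_prob) auto
  also have "\<dots> \<le> measure_pmf.prob (crossover_phase n L x (flip x F)) {r. onemax x < onemax r}"
    unfolding crossover_phase_def P_def[symmetric] child_def[symmetric]
  proof (rule measure_bind_pmf_ge[where c=1, simplified])
    fix cs assume "cs \<in> {cs. \<exists>j<L. cs (j, g) \<and> (\<forall>i\<in>F \<inter> x. \<not> cs (j, i))}"
    then obtain j where j: "j < L" "cs (j, g)" "\<forall>i\<in>F \<inter> x. \<not> cs (j, i)"
      by blast
    have "insert g x \<subseteq> child cs j"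
      using j x F by (auto simp: child_def flip_def)
    then have "card (insert g x) \<le> card (child cs j)"
      by (intro card_mono) (auto simp: child_def)
    then have "onemax x < onemax (child cs j)"
      using F(3) finite_subset[OF x] by (simp add: onemax_def)
    then have "set_pmf (bind_pmf (best_of L (child cs)) (\<lambda>y. return_pmf (if onemax x \<le> onemax y then y else x)))
        \<subseteq> {r. onemax x < onemax r}"
      using set_pmf_best_of(2)[of L _ "child cs" j] j L by fastforce
    then show "1 \<le> measure_pmf.prob (bind_pmf (best_of L (child cs))
        (\<lambda>y. return_pmf (if onemax x \<le> onemax y then y else x))) {r. onemax x < onemax r}"
      by (simp add: measure_pmf_eq_1_if_set_pmf_subset)
  qed
  finally show ?thesis .
qed

lemma mutation_then_crossover_improves:
  assumes x: "x \<subseteq> {..<n}" and "l \<le> n" "1 \<le> n" and L: "2 \<le> L" "l \<le> 2 * L"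
  shows "\<kappa> * (1 - (1 - real (n - onemax x) / real n) ^ (l * L))
           \<le> measure_pmf.prob (bind_pmf (mutation_phase n L x l) (crossover_phase n L x)) {r. onemax x < onemax r}"
proof -
  define hit where "hit = {x'. \<exists>F. F \<subseteq> {..<n} \<and> card F = l \<and> x' = flip x F \<and> F - x \<noteq> {}}"
  have "\<kappa> * (1 - (1 - real (n - onemax x) / real n) ^ (l * L)) \<le> \<kappa> * measure_pmf.prob (mutation_phase n L x l) hit"
    unfolding hit_def using mutation_phase_flips_zero[OF assms(1-3), of L] L \<kappa>_pos
    by (intro mult_left_mono) auto
  also have "\<dots> \<le> measure_pmf.prob (bind_pmf (mutation_phase n L x l) (crossover_phase n L x)) {r. onemax x < onemax r}"
  proof (rule measure_bind_pmf_ge)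
    fix x' assume "x' \<in> hit"
    then obtain F g where F: "F \<subseteq> {..<n}" "card F = l" "x' = flip x F" "g \<in> F" "g \<notin> x"
      by (auto simp: hit_def)
    have "card (F \<inter> x) \<le> 2 * L"
      using F L card_mono[of F "F \<inter> x"] finite_subset[OF F(1)] by auto
    then show "\<kappa> \<le> measure_pmf.prob (crossover_phase n L x x') {r. onemax x < onemax r}"
      using crossover_phase_improves[OF x F(1,4,5) L(1)] F(3) by simp
  qed (use \<kappa>_pos in simp)
  finally show ?thesis .
qed

lemma mutation_then_crossover_improves_exp:
  assumes x: "x \<subseteq> {..<n}" and "1 \<le> n" "2 \<le> L" and l: "l \<le> n" "real L / 2 \<le> real l" "l \<le> 2 * L"
  defines "a \<equiv> real (n - onemax x) * real L ^ 2 / (2 * real n)"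
  shows "\<kappa> * (1 - exp (- a))
           \<le> measure_pmf.prob (bind_pmf (mutation_phase n L x l) (crossover_phase n L x)) {r. onemax x < onemax r}"
proof -
  define d where "d = real (n - onemax x)"
  have d: "0 \<le> d" "d \<le> real n"
    by (auto simp: d_def)
  have "real L / 2 * real L \<le> real l * real L"
    using l(2) by (intro mult_right_mono) auto
  then have "d * (real L / 2 * real L) \<le> d * (real l * real L)"
    using d by (intro mult_left_mono) auto
  then have "a \<le> d / real n * real (l * L)"
    using assms(2) by (simp add: a_def d_def power2_eq_square field_simps)
  have "(1 - d / real n) ^ (l * L) \<le> exp (- (d / real n) * real (l * L))"
    using d assms(2) by (intro one_minus_power_le_exp) auto
  also have "\<dots> \<le> exp (- a)"
    using \<open>a \<le> d / real n * real (l * L)\<close> by simp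
  finally have "\<kappa> * (1 - exp (- a)) \<le> \<kappa> * (1 - (1 - d / real n) ^ (l * L))"
    using \<kappa>_pos by (intro mult_left_mono) auto
  also have "\<dots> \<le> measure_pmf.prob (bind_pmf (mutation_phase n L x l) (crossover_phase n L x)) {r. onemax x < onemax r}"
    unfolding d_def using mutation_then_crossover_improves[OF x l(1) assms(2,3) l(3)] by simp
  finally show ?thesis .
qed

lemma ga_iteration_improves:
  assumes x: "x \<subseteq> {..<n}" and L: "8 \<le> L" "L \<le> n"
  defines "a \<equiv> real (n - onemax x) * real L ^ 2 / (2 * real n)"
  shows "\<kappa> / 2 * (a / (1 + a)) \<le> measure_pmf.prob (ga_iteration n L x) {r. onemax x < onemax r}"
proof -
  define p where "p = real L / real n"
  have p: "p \<in> {0..1}" and np: "real n * p = real L"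
    using L by (auto simp: p_def)
  have a: "0 \<le> a"
    by (simp add: a_def)
  have "\<kappa> / 2 * (a / (1 + a)) \<le> \<kappa> / 2 * (1 - exp (- a))"
    using one_minus_exp_neg_ge[OF a] \<kappa>_pos by (intro mult_left_mono) auto
  also have "\<dots> = \<kappa> * (1 - exp (- a)) * (1 / 2)"
    by simp
  also have "\<dots> \<le> \<kappa> * (1 - exp (- a)) * measure_pmf.prob (binomial_pmf n p) {l. \<bar>real l - real n * p\<bar> < real n * p / 2}"
    using binomial_pmf_concentration[OF p, of n] np L \<kappa>_pos a by (intro mult_left_mono) auto
  also have "\<dots> \<le> measure_pmf.prob (ga_iteration n L x) {r. onemax x < onemax r}"
    unfolding ga_iteration_eq_phases p_def[symmetric]
  proof (rule measure_bind_pmf_ge)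
    fix l assume "l \<in> set_pmf (binomial_pmf n p)" "l \<in> {l. \<bar>real l - real n * p\<bar> < real n * p / 2}"
    then have "l \<le> n" "\<bar>real l - real L\<bar> < real L / 2"
      using p np by (auto simp: set_pmf_binomial_eq split: if_splits)
    moreover from this(2) have "real L / 2 \<le> real l" "l \<le> 2 * L"
      by linarith+
    ultimately show "\<kappa> * (1 - exp (- a))
        \<le> measure_pmf.prob (bind_pmf (mutation_phase n L x l) (crossover_phase n L x)) {r. onemax x < onemax r}"
      unfolding a_def using L by (intro mutation_then_crossover_improves_exp[OF x]) auto
  qed (use \<kappa>_pos a in auto)
  finally show ?thesis .
qed

section \<open>Potential functions\<close>

definition zeros :: "nat \<Rightarrow> nat set \<Rightarrow> nat" where
  "zeros n x = n - onemax x"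

lemma zeros_less:
  assumes "r \<subseteq> {..<n}" "onemax x < onemax r"
  shows "zeros n r < zeros n x"
  using assms card_mono[OF _ assms(1)] by (simp add: zeros_def onemax_def)

lemma zeros_le: "onemax x \<le> onemax r \<Longrightarrow> zeros n r \<le> zeros n x"
  by (simp add: zeros_def)

lemma zeros_eq_0_iff: "x \<subseteq> {..<n} \<Longrightarrow> zeros n x = 0 \<longleftrightarrow> x = {..<n}"
  using card_mono[of "{..<n}" x] card_subset_eq[of "{..<n}" x] by (auto simp: zeros_def onemax_def)

text \<open>By \<open>ga_iteration_improves\<close>, the GA leaves a level with \<open>d\<close> zero-bits after an expected number
  of at most \<open>4 / \<kappa> * (L + 2 n / (L d)) / (2 L)\<close> iterations of cost \<open>2 L\<close> each; summing over the
  levels below \<open>d\<close> gives the following bound on the remaining cost of the GA.\<close>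

definition ga_potential :: "nat \<Rightarrow> nat \<Rightarrow> nat \<Rightarrow> real" where
  "ga_potential n L d = 4 / \<kappa> * (real L * real d + 2 * real n / real L * harm d)"

lemma ga_potential_nonneg: "0 \<le> ga_potential n L d"
  unfolding ga_potential_def using \<kappa>_pos harm_nonneg[of d]
  by (intro mult_nonneg_nonneg add_nonneg_nonneg divide_nonneg_nonneg) auto

lemma ga_potential_mono: "d \<le> d' \<Longrightarrow> ga_potential n L d \<le> ga_potential n L d'"
  unfolding ga_potential_def using \<kappa>_pos harm_mono[of d d']
  by (intro mult_left_mono add_mono) (auto intro: mult_left_mono)

lemma ga_potential_0 [simp]: "ga_potential n L 0 = 0"
  by (simp add: ga_potential_def harm_def)

lemma ga_potential_Suc:
  "ga_potential n L (Suc d) = ga_potential n L d + 4 / \<kappa> * (real L + 2 * real n / (real L * real (Suc d)))"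
proof -
  have "real L * real (Suc d) + 2 * real n / real L * harm (Suc d)
      = (real L * real d + 2 * real n / real L * harm d) + (real L + 2 * real n / real L * (1 / real (Suc d)))"
    unfolding harm_Suc inverse_eq_divide distrib_left by (simp add: algebra_simps)
  also have "2 * real n / real L * (1 / real (Suc d)) = 2 * real n / (real L * real (Suc d))"
    by simp
  finally show ?thesis
    unfolding ga_potential_def by (simp add: distrib_left)
qed

lemma ga_potential_level_gain:
  assumes d: "1 \<le> d" and L: "1 \<le> L" and n: "1 \<le> n"
  defines "a \<equiv> real d * real L ^ 2 / (2 * real n)"
  assumes q: "\<kappa> / 2 * (a / (1 + a)) \<le> q"
  shows "2 * real L \<le> q * (ga_potential n L d - ga_potential n L (d - 1))"
proof -
  have a: "0 < a" "0 < 1 + a"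
    using assms by (simp_all add: a_def add_pos_nonneg)
  have "real L + 2 * real n / (real L * real d) = real L * (1 + a) / a"
    using d L n by (simp add: a_def field_simps power2_eq_square)
  then have "ga_potential n L d - ga_potential n L (d - 1) = 4 / \<kappa> * (real L * (1 + a) / a)"
    using ga_potential_Suc[of n L "d - 1"] d by simp
  moreover have "\<kappa> / 2 * (a / (1 + a)) * (4 / \<kappa> * (real L * (1 + a) / a))
      = (\<kappa> / 2 * (4 / \<kappa>)) * (a / (1 + a) * ((1 + a) / a)) * real L"
    by (simp only: times_divide_eq_right[symmetric] mult_ac)
  moreover have "\<kappa> / 2 * (4 / \<kappa>) = 2" "a / (1 + a) * ((1 + a) / a) = 1"
    using a \<kappa>_pos by simp_all
  moreover have "\<kappa> / 2 * (a / (1 + a)) * (4 / \<kappa> * (real L * (1 + a) / a))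
      \<le> q * (4 / \<kappa> * (real L * (1 + a) / a))"
    using q a \<kappa>_pos by (intro mult_right_mono) auto
  ultimately show ?thesis
    by simp
qed

lemma ga_potential_drift:
  assumes x: "x \<subseteq> {..<n}" "x \<noteq> {..<n}" and L: "8 \<le> L" "L \<le> n"
  shows "ennreal (2 * real L) + (\<integral>\<^sup>+r. ennreal (ga_potential n L (zeros n r)) \<partial>ga_iteration n L x)
           \<le> ennreal (ga_potential n L (zeros n x))"
proof -
  define d where "d = zeros n x"
  define q where "q = measure_pmf.prob (ga_iteration n L x) {r. onemax x < onemax r}"
  have d: "1 \<le> d"
    using zeros_eq_0_iff[OF x(1)] x(2) by (simp add: d_def)
  have q: "0 \<le> q" "q \<le> 1"
    by (auto simp: q_def)
  have after: "(\<integral>\<^sup>+r. ennreal (ga_potential n L (zeros n r)) \<partial>ga_iteration n L x)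
      \<le> ennreal (ga_potential n L (d - 1) * q + ga_potential n L d * (1 - q))"
    unfolding q_def
  proof (rule nn_integral_le_two_valued)
    fix r assume "r \<in> set_pmf (ga_iteration n L x)"
    with set_pmf_ga_iteration[of L x n r] have "r \<subseteq> {..<n}" "onemax x \<le> onemax r"
      using L x by auto
    then show "ennreal (ga_potential n L (zeros n r))
        \<le> ennreal (if onemax x < onemax r then ga_potential n L (d - 1) else ga_potential n L d)"
      using zeros_less[of r n x] zeros_le[of x r n]
      by (auto simp: d_def intro!: ennreal_leI ga_potential_mono)
  qed (auto intro: ga_potential_nonneg)
  have gain: "2 * real L + (ga_potential n L (d - 1) * q + ga_potential n L d * (1 - q)) \<le> ga_potential n L d"
  proof -
    have "\<kappa> / 2 * (real d * real L ^ 2 / (2 * real n) / (1 + real d * real L ^ 2 / (2 * real n))) \<le> q"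
      using ga_iteration_improves[OF x(1) L] by (simp add: q_def d_def zeros_def)
    then have "2 * real L \<le> q * (ga_potential n L d - ga_potential n L (d - 1))"
      using L by (intro ga_potential_level_gain[OF d]) auto
    then show ?thesis
      by (simp add: algebra_simps)
  qed
  have "ennreal (2 * real L) + (\<integral>\<^sup>+r. ennreal (ga_potential n L (zeros n r)) \<partial>ga_iteration n L x)
      \<le> ennreal (2 * real L) + ennreal (ga_potential n L (d - 1) * q + ga_potential n L d * (1 - q))"
    using after by (rule add_left_mono)
  also have "\<dots> = ennreal (2 * real L + (ga_potential n L (d - 1) * q + ga_potential n L d * (1 - q)))"
    using q ga_potential_nonneg[of n L "d - 1"] ga_potential_nonneg[of n L d] by (simp add: ennreal_plus)
  also have "\<dots> \<le> ennreal (ga_potential n L (zeros n x))"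
    using gain by (simp add: d_def ennreal_leI)
  finally show ?thesis .
qed

definition ea_level_cost :: "nat \<Rightarrow> nat \<Rightarrow> nat \<Rightarrow> real" where
  "ea_level_cost n k i = min (exp 1 * real n / real i) (real k)"

definition ea_cost_potential :: "nat \<Rightarrow> nat \<Rightarrow> nat \<Rightarrow> real" where
  "ea_cost_potential n k j = (\<Sum>i=1..j. ea_level_cost n k i)"

definition ea_fail_bound :: "nat \<Rightarrow> nat \<Rightarrow> real" where
  "ea_fail_bound n d = 1 - real d / (exp 1 * real n)"

text \<open>\<open>switch_potential n L k j\<close> bounds the expected cost of the GA phase when the EA starts afresh
  from \<open>j\<close> zero-bits: with probability at most \<open>ea_fail_bound n j ^ k\<close> it gives up on that level
  and the GA starts from \<open>j\<close> zero-bits, otherwise the EA reaches a lower level.\<close>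

fun switch_potential :: "nat \<Rightarrow> nat \<Rightarrow> nat \<Rightarrow> nat \<Rightarrow> real" where
  "switch_potential n L k 0 = 0"
| "switch_potential n L k (Suc j) = switch_potential n L k j
     + ea_fail_bound n (Suc j) ^ k * (ga_potential n L (Suc j) - switch_potential n L k j)"

text \<open>In an EA state with \<open>d\<close> zero-bits and \<open>c\<close> consecutive failures, \<open>k - c\<close> more failures
  trigger the switch. The first two summands bound the remaining cost of the EA, the last two the
  expected cost of the GA. Reachable states have \<open>c < k\<close>; capping \<open>c\<close> at \<open>k - 1\<close> makes the potential
  of the other states harmless.\<close>

definition potential :: "nat \<Rightarrow> nat \<Rightarrow> nat \<Rightarrow> state \<Rightarrow> real" where
  "potential n L k s = (case s of
      GA x \<Rightarrow> ga_potential n L (zeros n x)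
    | EA x c \<Rightarrow>
        min (exp 1 * real n / real (zeros n x)) (real (k - min c (k - 1)))
        + ea_cost_potential n k (zeros n x - 1) + switch_potential n L k (zeros n x - 1)
        + ea_fail_bound n (zeros n x) ^ (k - min c (k - 1))
            * (ga_potential n L (zeros n x) - switch_potential n L k (zeros n x - 1)))"

lemma ea_cost_potential_nonneg: "0 \<le> ea_cost_potential n k j"
  by (simp add: ea_cost_potential_def ea_level_cost_def sum_nonneg)

lemma ea_cost_potential_mono: "j \<le> j' \<Longrightarrow> ea_cost_potential n k j \<le> ea_cost_potential n k j'"
  unfolding ea_cost_potential_def by (intro sum_mono2) (auto simp: ea_level_cost_def)

lemma ea_fail_bound_bounds:
  assumes "d \<le> n"
  shows "0 \<le> ea_fail_bound n d" "ea_fail_bound n d \<le> 1"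
proof -
  have "real d \<le> 1 * real n"
    using assms by simp
  also have "\<dots> \<le> exp 1 * real n"
    by (intro mult_right_mono) auto
  finally show "0 \<le> ea_fail_bound n d" "ea_fail_bound n d \<le> 1"
    by (cases "n = 0") (auto simp: ea_fail_bound_def field_simps)
qed

lemma switch_potential_bounds:
  assumes "j \<le> n"
  shows "0 \<le> switch_potential n L k j" "switch_potential n L k j \<le> ga_potential n L j"
proof -
  have "0 \<le> switch_potential n L k j \<and> switch_potential n L k j \<le> ga_potential n L j"
    using assms
  proof (induction j)
    case (Suc j)
    let ?w = "ea_fail_bound n (Suc j) ^ k"
    have w: "0 \<le> ?w" "?w \<le> 1"
      using ea_fail_bound_bounds[OF Suc.prems] by (auto intro: power_le_one)
    have IH: "0 \<le> switch_potential n L k j" "switch_potential n L k j \<le> ga_potential n L (Suc j)"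
      using Suc ga_potential_mono[of j "Suc j" n L] by auto
    have "switch_potential n L k (Suc j) = (1 - ?w) * switch_potential n L k j + ?w * ga_potential n L (Suc j)"
      by (simp add: algebra_simps)
    moreover have "(1 - ?w) * switch_potential n L k j \<le> (1 - ?w) * ga_potential n L (Suc j)"
      using IH w by (intro mult_left_mono) auto
    moreover have "0 \<le> (1 - ?w) * switch_potential n L k j" "0 \<le> ?w * ga_potential n L (Suc j)"
      using IH w ga_potential_nonneg[of n L "Suc j"] by simp_all
    moreover have "(1 - ?w) * ga_potential n L (Suc j) + ?w * ga_potential n L (Suc j) = ga_potential n L (Suc j)"
      by (simp add: algebra_simps)
    ultimately show ?case
      by linarith
  qed simp
  then show "0 \<le> switch_potential n L k j" "switch_potential n L k j \<le> ga_potential n L j"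
    by auto
qed

lemma switch_potential_mono:
  assumes "j \<le> j'" "j' \<le> n"
  shows "switch_potential n L k j \<le> switch_potential n L k j'"
  using assms
proof (induction j' rule: dec_induct)
  case (step m)
  have "switch_potential n L k m \<le> ga_potential n L (Suc m)"
    using switch_potential_bounds(2)[of m n L k] ga_potential_mono[of m "Suc m" n L] step by simp
  moreover have "0 \<le> ea_fail_bound n (Suc m) ^ k"
    using ea_fail_bound_bounds(1)[of "Suc m" n] step by simp
  ultimately have "0 \<le> ea_fail_bound n (Suc m) ^ k * (ga_potential n L (Suc m) - switch_potential n L k m)"
    by simp
  then show ?case
    using step by simp
qed simp

lemma potential_EA_0:
  "potential n L k (EA x 0) = ea_cost_potential n k (zeros n x) + switch_potential n L k (zeros n x)"
  by (cases "zeros n x") (simp_all add: potential_def ea_cost_potential_def ea_level_cost_def)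

lemma ea_potential_ineq_switch:
  fixes q r S M g u :: real
  assumes "1 - q \<le> r" "q \<le> 1" "0 \<le> q" "0 \<le> S" "M \<le> g" "1 \<le> u"
  shows "1 + (S + M) * q + g * (1 - q) \<le> min u 1 + S + M + r * (g - M)"
proof -
  have "(1 - q) * (g - M) \<le> r * (g - M)"
    using assms by (intro mult_right_mono) auto
  moreover have "S * q \<le> S"
    using assms by (simp add: mult_left_le)
  ultimately show ?thesis
    using assms by (simp add: algebra_simps)
qed

lemma ea_potential_ineq_count:
  fixes q r S M g u w :: real
  assumes "1 \<le> q * u" "q \<le> 1" "0 \<le> q" "1 - q \<le> r" "0 \<le> r" "M \<le> g" "0 \<le> w" "0 \<le> u"
  shows "1 + (S + M) * q + (min u w + S + M + r ^ m * (g - M)) * (1 - q)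
           \<le> min u (w + 1) + S + M + r ^ Suc m * (g - M)"
proof -
  have "1 + (1 - q) * min u w \<le> min u (w + 1)"
  proof (cases "u \<le> w")
    case False
    have "(1 - q) * w \<le> (1 - q) * u"
      using False assms by (intro mult_left_mono) auto
    moreover have "(1 - q) * w \<le> w"
      using assms by (simp add: mult_left_le_one_le)
    ultimately show ?thesis
      using False assms by (simp add: algebra_simps)
  qed (use assms in \<open>simp add: algebra_simps\<close>)
  moreover have "(1 - q) * (r ^ m * (g - M)) \<le> r ^ Suc m * (g - M)"
  proof -
    have "(1 - q) * (r ^ m * (g - M)) \<le> r * (r ^ m * (g - M))"
      using assms by (intro mult_right_mono) auto
    then show ?thesis
      by (simp add: algebra_simps)
  qed
  moreover have "1 + (S + M) * q + (min u w + S + M + r ^ m * (g - M)) * (1 - q)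
      = (1 + (1 - q) * min u w) + S + M + (1 - q) * (r ^ m * (g - M))"
    by (simp add: algebra_simps)
  ultimately show ?thesis
    by linarith
qed

lemma potential_nonneg: "0 \<le> potential n L k s"
proof (cases s)
  case (EA x c)
  define d where "d = zeros n x"
  have d: "d \<le> n" "d - 1 \<le> n"
    by (auto simp: d_def zeros_def)
  have "switch_potential n L k (d - 1) \<le> ga_potential n L d"
    using switch_potential_bounds(2)[OF d(2), of L k] ga_potential_mono[of "d - 1" d n L] by simp
  then have "0 \<le> ea_fail_bound n d ^ (k - min c (k - 1)) * (ga_potential n L d - switch_potential n L k (d - 1))"
    using ea_fail_bound_bounds(1)[OF d(1)] by simp
  then show ?thesis
    using EA switch_potential_bounds(1)[OF d(2), of L k] ea_cost_potential_nonneg[of n k "d - 1"]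
    by (simp add: potential_def d_def[symmetric])
qed (simp add: potential_def ga_potential_nonneg)

lemma potential_ea_step_le:
  assumes x: "x \<subseteq> {..<n}" and s': "s' \<in> set_pmf (ea_step n k x c)"
  shows "potential n L k s' \<le> (if onemax x < onemax (cur s')
           then ea_cost_potential n k (zeros n x - 1) + switch_potential n L k (zeros n x - 1)
           else potential n L k (if Suc c \<ge> k then GA x else EA x (Suc c)))"
proof -
  obtain y where y: "y \<in> set_pmf (ea_mutation n x)"
    and s'_eq: "s' = (if onemax y > onemax x then EA y 0
        else (let x' = (if onemax y \<ge> onemax x then y else x) in if Suc c \<ge> k then GA x' else EA x' (Suc c)))"
    using s' unfolding ea_step_def by auto
  have y_sub: "y \<subseteq> {..<n}"
    using set_pmf_ea_mutation[OF x y] .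
  show ?thesis
  proof (cases "onemax x < onemax y")
    case True
    then have "zeros n y \<le> zeros n x - 1" "zeros n x \<le> n"
      using zeros_less[OF y_sub True] by (auto simp: zeros_def)
    then have "potential n L k s' \<le> ea_cost_potential n k (zeros n x - 1) + switch_potential n L k (zeros n x - 1)"
      using True by (auto simp: s'_eq potential_EA_0 intro!: add_mono ea_cost_potential_mono switch_potential_mono)
    then show ?thesis
      using True by (simp add: s'_eq)
  next
    case False
    define x' where "x' = (if onemax y \<ge> onemax x then y else x)"
    have "onemax x' = onemax x"
      using False by (simp add: x'_def)
    then show ?thesis
      using False by (simp add: s'_eq x'_def[symmetric] potential_def zeros_def)
  qed
qed

lemma prob_ea_step_improves:
  "measure_pmf.prob (ea_step n k x c) {s'. onemax x < onemax (cur s')}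
     = measure_pmf.prob (ea_mutation n x) {y. onemax x < onemax y}"
  unfolding ea_step_def by (auto simp: Let_def intro!: arg_cong[where f="measure_pmf.prob _"])

lemma potential_EA_ge_one_step:
  assumes d: "1 \<le> zeros n x" and k: "1 \<le> k"
    and q: "real (zeros n x) / (exp 1 * real n) \<le> q" "0 \<le> q" "q \<le> 1"
  shows "1 + ((ea_cost_potential n k (zeros n x - 1) + switch_potential n L k (zeros n x - 1)) * q
             + potential n L k (if Suc c \<ge> k then GA x else EA x (Suc c)) * (1 - q))
           \<le> potential n L k (EA x c)"
proof -
  define d where "d = zeros n x"
  define S where "S = ea_cost_potential n k (d - 1)"
  define M where "M = switch_potential n L k (d - 1)"
  define g where "g = ga_potential n L d"
  define r where "r = ea_fail_bound n d"
  define u where "u = exp 1 * real n / real d"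
  define B where "B = potential n L k (if Suc c \<ge> k then GA x else EA x (Suc c))"
  have n: "1 \<le> n" and dn: "d \<le> n"
    using d by (auto simp: d_def zeros_def)
  have S: "0 \<le> S"
    by (simp add: S_def ea_cost_potential_nonneg)
  have "M \<le> ga_potential n L (d - 1)"
    using dn unfolding M_def by (intro switch_potential_bounds) simp
  then have M: "M \<le> g"
    using ga_potential_mono[of "d - 1" d n L] by (simp add: g_def)
  have r: "0 \<le> r" "1 - q \<le> r"
    using ea_fail_bound_bounds[OF dn] q(1) by (auto simp: r_def d_def ea_fail_bound_def)
  have "real d \<le> 1 * real n"
    using dn by simp
  also have "\<dots> \<le> exp 1 * real n"
    by (intro mult_right_mono) auto
  finally have u: "1 \<le> u"
    using d by (simp add: u_def d_def field_simps)
  have "real d / (exp 1 * real n) * u = 1"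
    using d n by (simp add: u_def d_def field_simps)
  moreover have "real d / (exp 1 * real n) * u \<le> q * u"
    using q(1) u by (intro mult_right_mono) (auto simp: d_def)
  ultimately have qu: "1 \<le> q * u"
    by linarith
  show ?thesis
  proof (cases "Suc c \<ge> k")
    case True
    then have "potential n L k (EA x c) = min u 1 + S + M + r * (g - M)" "B = g"
      using k by (auto simp: B_def potential_def d_def[symmetric] S_def M_def g_def r_def u_def)
    then show ?thesis
      using ea_potential_ineq_switch[OF r(2) q(3,2) S M u] by (simp add: B_def S_def M_def d_def add.assoc)
  next
    case False
    then have "potential n L k (EA x c)
        = min u (real (k - Suc c) + 1) + S + M + r ^ Suc (k - Suc c) * (g - M)"
      "B = min u (real (k - Suc c)) + S + M + r ^ (k - Suc c) * (g - M)"
      by (auto simp: B_def potential_def d_def[symmetric] S_def M_def g_def r_def u_def Suc_diff_Suc)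
    then show ?thesis
      using ea_potential_ineq_count[OF qu q(3,2) r(2,1) M, of "real (k - Suc c)" S "k - Suc c"] u
      by (simp add: B_def S_def M_def d_def add.assoc)
  qed
qed

lemma ea_potential_drift:
  assumes x: "x \<subseteq> {..<n}" "x \<noteq> {..<n}" and k: "1 \<le> k"
  shows "1 + (\<integral>\<^sup>+s'. ennreal (potential n L k s') \<partial>ea_step n k x c) \<le> ennreal (potential n L k (EA x c))"
proof -
  define q where "q = measure_pmf.prob (ea_step n k x c) {s'. onemax x < onemax (cur s')}"
  define A where "A = ea_cost_potential n k (zeros n x - 1) + switch_potential n L k (zeros n x - 1)"
  define B where "B = potential n L k (if Suc c \<ge> k then GA x else EA x (Suc c))"
  have d: "1 \<le> zeros n x"
    using zeros_eq_0_iff[OF x(1)] x(2) by (simp add: Suc_leI)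
  then have q: "real (zeros n x) / (exp 1 * real n) \<le> q" "0 \<le> q" "q \<le> 1"
    using ea_mutation_improves[OF x(1)] by (auto simp: q_def prob_ea_step_improves zeros_def)
  have A: "0 \<le> A"
    using ea_cost_potential_nonneg switch_potential_bounds(1)[of "zeros n x - 1" n L k]
    by (simp add: A_def zeros_def)
  have after: "(\<integral>\<^sup>+s'. ennreal (potential n L k s') \<partial>ea_step n k x c) \<le> ennreal (A * q + B * (1 - q))"
    unfolding q_def
  proof (rule nn_integral_le_two_valued)
    fix s' assume "s' \<in> set_pmf (ea_step n k x c)"
    from potential_ea_step_le[OF x(1) this, of L]
    show "ennreal (potential n L k s') \<le> ennreal (if onemax x < onemax (cur s') then A else B)"
      by (auto simp: A_def B_def intro: ennreal_leI)
  qed (use A potential_nonneg in \<open>auto simp: B_def\<close>)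
  have "0 \<le> A * q + B * (1 - q)"
    using A q potential_nonneg[of n L k] by (simp add: B_def)
  then have "1 + ennreal (A * q + B * (1 - q)) = ennreal (1 + (A * q + B * (1 - q)))"
    by (simp add: ennreal_plus)
  also have "\<dots> \<le> ennreal (potential n L k (EA x c))"
    unfolding A_def B_def by (intro ennreal_leI potential_EA_ge_one_step[OF d k q])
  finally show ?thesis
    using after by (meson add_left_mono order_trans)
qed

lemma set_pmf_ea_step:
  assumes "x \<subseteq> {..<n}" "s' \<in> set_pmf (ea_step n k x c)"
  shows "cur s' \<subseteq> {..<n}"
proof -
  obtain y where "y \<in> set_pmf (ea_mutation n x)"
    and "s' = (if onemax y > onemax x then EA y 0
        else (let x' = (if onemax y \<ge> onemax x then y else x) in if Suc c \<ge> k then GA x' else EA x' (Suc c)))"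
    using assms(2) unfolding ea_step_def by auto
  then show ?thesis
    using set_pmf_ea_mutation[OF assms(1)] assms(1) by (auto simp: Let_def)
qed

lemma set_pmf_step:
  assumes "cur s \<subseteq> {..<n}" "1 \<le> L" "s' \<in> set_pmf (step n L k s)"
  shows "cur s' \<subseteq> {..<n}"
proof (cases s)
  case (EA x c)
  then show ?thesis
    using assms set_pmf_ea_step[of x n s' k c] by (auto simp: step_def split: if_splits)
next
  case (GA x)
  then have "s' = s \<or> (\<exists>r\<in>set_pmf (ga_iteration n L x). s' = GA r)"
    using assms(3) by (auto simp: step_def split: if_splits)
  then show ?thesis
    using assms(1) GA set_pmf_ga_iteration(1)[OF assms(2), of x n] by fastforce
qed

lemma set_pmf_init:
  assumes "s \<in> set_pmf (init n)"
  shows "\<exists>x. x \<subseteq> {..<n} \<and> s = EA x 0"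
proof -
  obtain x where "x \<in> set_pmf (pmf_of_set (Pow {..<n}))" "s = EA x 0"
    using assms unfolding init_def set_map_pmf by blast
  moreover have "set_pmf (pmf_of_set (Pow {..<n})) = Pow {..<n}"
    by (rule set_pmf_of_set) auto
  ultimately show ?thesis
    by blast
qed

lemma potential_drift:
  assumes s: "cur s \<subseteq> {..<n}" and L: "8 \<le> L" "L \<le> n" and k: "1 \<le> k"
  shows "ennreal (real (cost n L s)) + (\<integral>\<^sup>+s'. ennreal (potential n L k s') \<partial>step n L k s)
           \<le> ennreal (potential n L k s)"
proof (cases "cur s = {..<n}")
  case False
  show ?thesis
  proof (cases s)
    case (EA x c)
    then have "1 + (\<integral>\<^sup>+s'. ennreal (potential n L k s') \<partial>ea_step n k x c) \<le> ennreal (potential n L k (EA x c))"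
      using ea_potential_drift s False k by simp
    then show ?thesis
      using EA False by (simp add: step_def cost_def)
  next
    case (GA x)
    then have "ennreal (2 * real L) + (\<integral>\<^sup>+r. ennreal (ga_potential n L (zeros n r)) \<partial>ga_iteration n L x)
        \<le> ennreal (ga_potential n L (zeros n x))"
      using ga_potential_drift s False L by simp
    then show ?thesis
      using GA False by (simp add: step_def cost_def potential_def)
  qed
qed (simp add: step_def cost_def)

lemma expected_evals_le_potential:
  assumes L: "8 \<le> L" "L \<le> n" and k: "1 \<le> k"
  shows "expected_evals n L k \<le> ennreal (1 + ea_cost_potential n k n + switch_potential n L k n)"
proof -
  define P0 where "P0 = ea_cost_potential n k n + switch_potential n L k n"
  have P0: "0 \<le> P0"
    using ea_cost_potential_nonneg switch_potential_bounds(1)[of n n L k] by (simp add: P0_def)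
  have "(\<Sum>t. \<integral>\<^sup>+s. ennreal (real (cost n L s)) \<partial>dist n L k t)
      \<le> (\<integral>\<^sup>+s. ennreal (potential n L k s) \<partial>dist n L k 0)"
  proof (rule total_cost_le_potential[where K="step n L k" and S="{s. cur s \<subseteq> {..<n}}"])
    show "set_pmf (dist n L k 0) \<subseteq> {s. cur s \<subseteq> {..<n}}"
      using set_pmf_init by fastforce
    show "set_pmf (step n L k s) \<subseteq> {s. cur s \<subseteq> {..<n}}" if "s \<in> {s. cur s \<subseteq> {..<n}}" for s
      using that set_pmf_step[of s n L] L(1) by (simp add: subset_eq)
  qed (use potential_drift[OF _ L k] in auto)
  also have "\<dots> \<le> (\<integral>\<^sup>+s. ennreal P0 \<partial>init n)"
    unfolding Defs.dist.simps(1)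
  proof (intro nn_integral_mono_AE, unfold AE_measure_pmf_iff, intro ballI)
    fix s assume "s \<in> set_pmf (init n)"
    then obtain x where "s = EA x 0"
      using set_pmf_init by blast
    moreover have "zeros n x \<le> n"
      by (simp add: zeros_def)
    ultimately show "ennreal (potential n L k s) \<le> ennreal P0"
      unfolding P0_def
      by (auto simp: potential_EA_0 intro!: ennreal_leI add_mono ea_cost_potential_mono switch_potential_mono)
  qed
  finally have "expected_evals n L k \<le> 1 + ennreal P0"
    unfolding expected_evals_def by (simp add: add_left_mono)
  then show ?thesis
    using P0 by (simp add: P0_def ennreal_plus add.assoc)
qed

section \<open>Evaluating the potential\<close>

lemma sum_inverse_greaterThanAtMost:
  "J \<le> N \<Longrightarrow> (\<Sum>i\<in>{J<..N}. 1 / real i) = harm N - harm J"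
proof (induction N rule: dec_induct)
  case (step m)
  have "{J<..Suc m} = insert (Suc m) {J<..m}"
    using step by auto
  then show ?case
    using step by (simp add: harm_Suc inverse_eq_divide)
qed simp

lemma ea_cost_potential_le:
  assumes k: "3 \<le> k" and kn: "2 * real k \<le> exp 1 * real n"
  shows "ea_cost_potential n k n \<le> exp 1 * real n * ln (2 * real k)"
proof -
  define t where "t = exp 1 * real n / real k"
  define J where "J = nat \<lfloor>t\<rfloor>"
  have t: "2 \<le> t" "t \<le> real n"
  proof -
    show "2 \<le> t"
      using kn k by (simp add: t_def field_simps)
    have "exp 1 * real n \<le> real k * real n"
      using exp_le k by (intro mult_right_mono) auto
    then show "t \<le> real n"
      using k by (simp add: t_def field_simps)
  qed
  have J: "real J \<le> t" "t / 2 \<le> real J" "1 \<le> J" "J \<le> n"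
    using t by (auto simp: J_def) linarith+
  have "ea_cost_potential n k n = (\<Sum>i\<in>{1..J}. ea_level_cost n k i) + (\<Sum>i\<in>{J<..n}. ea_level_cost n k i)"
    unfolding ea_cost_potential_def using J by (subst sum.union_disjoint[symmetric]) (auto intro!: sum.cong)
  also have "(\<Sum>i\<in>{1..J}. ea_level_cost n k i) \<le> real J * real k"
    using sum_mono[of "{1..J}" "ea_level_cost n k" "\<lambda>_. real k"] by (simp add: ea_level_cost_def)
  also have "\<dots> \<le> exp 1 * real n"
    using J(1) k by (simp add: t_def field_simps)
  also have "(\<Sum>i\<in>{J<..n}. ea_level_cost n k i) \<le> exp 1 * real n * (\<Sum>i\<in>{J<..n}. 1 / real i)"
    by (simp add: sum_distrib_left ea_level_cost_def sum_mono)
  also have "\<dots> \<le> exp 1 * real n * (ln (real n) - ln (real J))"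
    using harm_diff_le_ln_diff[of J n] J by (simp add: sum_inverse_greaterThanAtMost)
  also have "\<dots> \<le> exp 1 * real n * (ln (2 * real k) - 1)"
  proof (intro mult_left_mono)
    have "ln (t / 2) \<le> ln (real J)"
      using J t by simp
    moreover have "ln (t / 2) = 1 + ln (real n) - ln (2 * real k)"
      using J t k by (simp add: t_def ln_div ln_mult)
    ultimately show "ln (real n) - ln (real J) \<le> ln (2 * real k) - 1"
      by simp
  qed simp
  finally show ?thesis
    by (simp add: algebra_simps)
qed

lemma switch_potential_le:
  assumes "i \<le> n" "j \<le> n"
  shows "switch_potential n L k j \<le> ga_potential n L i + real j * ea_fail_bound n i ^ k * ga_potential n L j"
  using assms(2)
proof (induction j)
  case (Suc j)
  have r: "0 \<le> ea_fail_bound n i"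
    using ea_fail_bound_bounds(1)[OF assms(1)] .
  show ?case
  proof (cases "Suc j \<le> i")
    case True
    have "switch_potential n L k (Suc j) \<le> ga_potential n L i"
      using order_trans[OF switch_potential_bounds(2)[OF Suc.prems, of L k] ga_potential_mono[OF True, of n L]] .
    then show ?thesis
      using r ga_potential_nonneg[of n L "Suc j"] by (simp add: add_increasing2)
  next
    case False
    have "switch_potential n L k (Suc j) \<le> switch_potential n L k j + ea_fail_bound n (Suc j) ^ k * ga_potential n L (Suc j)"
      using switch_potential_bounds(1)[of j n L k] ea_fail_bound_bounds(1)[OF Suc.prems] Suc.prems
      by (simp add: mult_left_mono)
    also have "ea_fail_bound n (Suc j) ^ k * ga_potential n L (Suc j) \<le> ea_fail_bound n i ^ k * ga_potential n L (Suc j)"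
      using False ea_fail_bound_bounds(1)[OF Suc.prems] ga_potential_nonneg
      by (intro mult_right_mono power_mono) (auto simp: ea_fail_bound_def divide_right_mono)
    also have "switch_potential n L k j \<le> ga_potential n L i + real j * ea_fail_bound n i ^ k * ga_potential n L (Suc j)"
    proof -
      have "real j * ea_fail_bound n i ^ k * ga_potential n L j \<le> real j * ea_fail_bound n i ^ k * ga_potential n L (Suc j)"
        using r ga_potential_mono[of j "Suc j" n L] by (intro mult_left_mono) auto
      then show ?thesis
        using Suc by simp
    qed
    finally show ?thesis
      by (simp add: algebra_simps)
  qed
qed (simp add: ga_potential_nonneg)

lemma switch_potential_le_ga_potential:
  assumes L: "1 \<le> L" "L \<le> n" and k: "1 \<le> k"
  defines "i \<equiv> nat \<lceil>exp 1 * real n * ln (real n * real L) / real k\<rceil>"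
  assumes i: "i \<le> n"
  shows "switch_potential n L k n \<le> ga_potential n L i + ga_potential n L n / real L"
proof -
  have "exp 1 * real n * ln (real n * real L) / real k \<le> real i"
    unfolding i_def by linarith
  then have "ln (real n * real L) \<le> real i / (exp 1 * real n) * real k"
    using L k by (simp add: field_simps)
  then have "exp (- (real i / (exp 1 * real n)) * real k) \<le> exp (- ln (real n * real L))"
    by simp
  moreover have "ea_fail_bound n i ^ k \<le> exp (- (real i / (exp 1 * real n)) * real k)"
    unfolding ea_fail_bound_def using ea_fail_bound_bounds[OF i]
    by (intro one_minus_power_le_exp) (auto simp: ea_fail_bound_def)
  ultimately have "ea_fail_bound n i ^ k \<le> exp (- ln (real n * real L))"
    by (rule order_trans[rotated])
  also have "\<dots> = 1 / (real n * real L)"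
    using L by (simp add: exp_minus field_simps)
  finally have "real n * ea_fail_bound n i ^ k * ga_potential n L n \<le> real n * (1 / (real n * real L)) * ga_potential n L n"
    using ga_potential_nonneg by (intro mult_right_mono mult_left_mono) auto
  then show ?thesis
    using switch_potential_le[OF i, of n L k] L by simp
qed

lemma ga_potential_le:
  assumes "i \<le> n" "1 \<le> n" "1 \<le> L"
  shows "ga_potential n L i \<le> 4 / \<kappa> * (real L * real i + 2 * real n * (1 + ln (real n)) / real L)"
proof -
  have "harm i \<le> 1 + ln (real n)"
    using order_trans[OF harm_mono[OF assms(1)] harm_le_one_plus_ln[OF assms(2)]] .
  then have "2 * real n / real L * harm i \<le> 2 * real n * (1 + ln (real n)) / real L"
    using mult_left_mono[of "harm i" "1 + ln (real n)" "2 * real n / real L"] by simp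
  then show ?thesis
    unfolding ga_potential_def using \<kappa>_pos by (intro mult_left_mono add_mono) auto
qed

lemma ga_potential_div_le:
  assumes L: "1 \<le> L" and n: "1 \<le> n"
  shows "ga_potential n L n / real L \<le> 4 / \<kappa> * (real n + 2 * real n * (1 + ln (real n)) / real L)"
proof -
  define X where "X = 2 * real n * (1 + ln (real n)) / real L"
  have "0 \<le> X"
    using n by (simp add: X_def)
  then have "X / real L \<le> X / 1"
    using L by (intro divide_left_mono) auto
  have "ga_potential n L n / real L \<le> 4 / \<kappa> * (real L * real n + X) / real L"
    using ga_potential_le[OF order_refl n L] L unfolding X_def by (intro divide_right_mono) auto
  also have "\<dots> = 4 / \<kappa> * (real n + X / real L)"
    using L by (simp add: field_simps)
  also have "\<dots> \<le> 4 / \<kappa> * (real n + X)"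
    using \<open>X / real L \<le> X / 1\<close> \<kappa>_pos by (intro mult_left_mono add_left_mono) auto
  finally show ?thesis
    by (simp add: X_def)
qed

lemma expected_evals_le_explicit:
  assumes L: "8 \<le> L" "L \<le> n" and k: "3 \<le> k" "2 * real k \<le> exp 1 * real n"
    and t: "exp 1 * real n * ln (real n * real L) / real k + 1 \<le> real n"
  shows "expected_evals n L k \<le> ennreal (1 + exp 1 * real n * ln (2 * real k)
           + 4 / \<kappa> * (exp 1 * real n * real L * ln (real n * real L) / real k + real L + real n
                       + 4 * real n * (1 + ln (real n)) / real L))"
proof -
  define t where "t = exp 1 * real n * ln (real n * real L) / real k"
  define i where "i = nat \<lceil>t\<rceil>"
  have n: "1 \<le> n"
    using L by simp
  have "1 * 1 \<le> real n * real L"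
    using L by (intro mult_mono) auto
  then have "0 \<le> ln (real n * real L)"
    by simp
  then have i: "t \<le> real i" "real i \<le> t + 1" "i \<le> n"
    using t k by (auto simp: i_def t_def)
  have g_i: "ga_potential n L i \<le> 4 / \<kappa> * (real L * (t + 1) + 2 * real n * (1 + ln (real n)) / real L)"
  proof -
    have "real L * real i \<le> real L * (t + 1)"
      using i by (intro mult_left_mono) auto
    then have "4 / \<kappa> * (real L * real i + 2 * real n * (1 + ln (real n)) / real L)
        \<le> 4 / \<kappa> * (real L * (t + 1) + 2 * real n * (1 + ln (real n)) / real L)"
      using \<kappa>_pos by (intro mult_left_mono) auto
    then show ?thesis
      using ga_potential_le[OF i(3) n, of L] L by linarith
  qed
  have g_n: "ga_potential n L n / real L \<le> 4 / \<kappa> * (real n + 2 * real n * (1 + ln (real n)) / real L)"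
    using L by (intro ga_potential_div_le) auto
  have "expected_evals n L k \<le> ennreal (1 + ea_cost_potential n k n + switch_potential n L k n)"
    using expected_evals_le_potential L k by simp
  also have "\<dots> \<le> ennreal (1 + exp 1 * real n * ln (2 * real k) + (ga_potential n L i + ga_potential n L n / real L))"
    using ea_cost_potential_le[OF k] switch_potential_le_ga_potential[of L n k] L k i
    by (intro ennreal_leI add_mono) (auto simp: i_def t_def)
  also have "\<dots> \<le> ennreal (1 + exp 1 * real n * ln (2 * real k)
           + 4 / \<kappa> * (exp 1 * real n * real L * ln (real n * real L) / real k + real L + real n
                       + 4 * real n * (1 + ln (real n)) / real L))"
  proof (intro ennreal_leI add_left_mono)
    have "ga_potential n L i + ga_potential n L n / real L
        \<le> 4 / \<kappa> * (real L * (t + 1) + 2 * real n * (1 + ln (real n)) / real L)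
          + 4 / \<kappa> * (real n + 2 * real n * (1 + ln (real n)) / real L)"
      using g_i g_n by linarith
    also have "\<dots> = 4 / \<kappa> * (real L * t + real L + real n + 4 * real n * (1 + ln (real n)) / real L)"
      by (simp add: algebra_simps add_divide_distrib)
    finally show "ga_potential n L i + ga_potential n L n / real L
        \<le> 4 / \<kappa> * (exp 1 * real n * real L * ln (real n * real L) / real k + real L + real n
                    + 4 * real n * (1 + ln (real n)) / real L)"
      by (simp add: t_def mult_ac)
  qed
  finally show ?thesis .
qed

definition evals_const :: "real \<Rightarrow> real \<Rightarrow> real \<Rightarrow> real" where
  "evals_const c1 c3 C = 1 + exp 1 * (\<bar>ln (2 * C)\<bar> + 2) + 4 / \<kappa> * (2 * exp 1 / c3 + 2 + 8 / c1)"

lemma ln_le_lnln_of_le_ln_squared: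
  fixes C :: real
  assumes "0 < C" "1 \<le> ln (real n)" "1 \<le> ln (ln (real n))" "0 < real k" "real k \<le> C * ln (real n) ^ 2"
  shows "ln (2 * real k) \<le> (\<bar>ln (2 * C)\<bar> + 2) * ln (ln (real n))"
proof -
  have "ln (2 * real k) \<le> ln (2 * (C * ln (real n) ^ 2))"
    using assms(4,5) by simp
  also have "\<dots> = ln (2 * C) + 2 * ln (ln (real n))"
    using assms(1,2) by (simp add: ln_mult ln_realpow)
  also have "\<dots> \<le> (\<bar>ln (2 * C)\<bar> + 2) * ln (ln (real n))"
  proof -
    have "\<bar>ln (2 * C)\<bar> * 1 \<le> \<bar>ln (2 * C)\<bar> * ln (ln (real n))"
      using assms(3) by (intro mult_left_mono) auto
    then show ?thesis
      by (simp add: algebra_simps)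
  qed
  finally show ?thesis .
qed

lemma ga_cost_terms_le:
  fixes c1 c3 :: real
  assumes c: "0 < c1" "0 < c3" and ln_n: "1 \<le> ln (real n)"
    and L: "c1 * ln (real n) \<le> real L" "L \<le> n" and k: "c3 * real L * ln (real n) \<le> real k"
  shows "exp 1 * real n * real L * ln (real n * real L) / real k + real L + real n
           + 4 * real n * (1 + ln (real n)) / real L \<le> (2 * exp 1 / c3 + 2 + 8 / c1) * real n"
proof -
  have c1_ln: "0 < c1 * ln (real n)"
    using c ln_n by simp
  then have L_pos: "0 < real L"
    using L by linarith
  then have c3_L_ln: "0 < c3 * real L * ln (real n)"
    using c ln_n by simp
  have "ln (real n * real L) \<le> 2 * ln (real n)"
    using L L_pos by (simp add: ln_mult)
  then have "exp 1 * real n * real L * ln (real n * real L) / real k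
      \<le> exp 1 * real n * real L * (2 * ln (real n)) / (c3 * real L * ln (real n))"
    using L_pos k c3_L_ln ln_n by (intro frac_le mult_left_mono) auto
  also have "\<dots> = 2 * exp 1 / c3 * real n"
    using L_pos c ln_n by (simp add: field_simps)
  finally have "exp 1 * real n * real L * ln (real n * real L) / real k \<le> 2 * exp 1 / c3 * real n" .
  moreover have "4 * real n * (1 + ln (real n)) / real L \<le> 4 * real n * (2 * ln (real n)) / (c1 * ln (real n))"
    using L_pos L c1_ln ln_n by (intro frac_le mult_left_mono) auto
  moreover have "4 * real n * (2 * ln (real n)) / (c1 * ln (real n)) = 8 / c1 * real n"
    using c ln_n by (simp add: field_simps)
  ultimately show ?thesis
    using L by (simp add: algebra_simps)
qed

lemma explicit_bound_le_n_lnln: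
  fixes c1 c3 C :: real
  assumes c: "0 < c1" "0 < c3" "0 < C" and ln_n: "1 \<le> ln (real n)" and lnln: "1 \<le> ln (ln (real n))"
    and L: "c1 * ln (real n) \<le> real L" "L \<le> n"
    and k: "c3 * real L * ln (real n) \<le> real k" "real k \<le> C * ln (real n) ^ 2"
  shows "1 + exp 1 * real n * ln (2 * real k)
           + 4 / \<kappa> * (exp 1 * real n * real L * ln (real n * real L) / real k + real L + real n
                       + 4 * real n * (1 + ln (real n)) / real L)
         \<le> evals_const c1 c3 C * real n * ln (ln (real n))"
proof -
  define N where "N = real n"
  define \<Lambda> where "\<Lambda> = ln (ln (real n))"
  have N: "1 \<le> N"
    using ln_n by (cases n) (auto simp: N_def)
  have "0 < real k"
    using c ln_n L k by (smt (verit) mult_pos_pos)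
  then have "exp 1 * N * ln (2 * real k) \<le> exp 1 * N * ((\<bar>ln (2 * C)\<bar> + 2) * \<Lambda>)"
    using ln_le_lnln_of_le_ln_squared[OF c(3) ln_n lnln _ k(2)] N unfolding \<Lambda>_def by (simp add: mult_left_mono)
  moreover have "4 / \<kappa> * (exp 1 * N * real L * ln (real n * real L) / real k + real L + N
      + 4 * N * (1 + ln (real n)) / real L) \<le> 4 / \<kappa> * ((2 * exp 1 / c3 + 2 + 8 / c1) * (N * \<Lambda>))"
  proof -
    have "(2 * exp 1 / c3 + 2 + 8 / c1) * N \<le> (2 * exp 1 / c3 + 2 + 8 / c1) * (N * \<Lambda>)"
      using N lnln c by (intro mult_left_mono) (auto simp: \<Lambda>_def)
    then show ?thesis
      using ga_cost_terms_le[OF c(1,2) ln_n L k(1)] \<kappa>_pos by (intro mult_left_mono) (auto simp: N_def)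
  qed
  moreover have "1 \<le> N * \<Lambda>"
    using mult_mono[OF N lnln] N by (simp add: \<Lambda>_def)
  ultimately show ?thesis
    by (simp add: evals_const_def N_def \<Lambda>_def algebra_simps)
qed

lemma expected_evals_le_n_lnln:
  fixes c1 c3 C :: real
  assumes c: "0 < c1" "0 < c3" "0 < C"
    and large: "1 \<le> ln (real n)" "1 \<le> ln (ln (real n))" "8 \<le> c1 * ln (real n)"
      "4 * exp 1 \<le> c1 * c3 * ln (real n)" "2 * C * ln (real n) ^ 2 \<le> exp 1 * real n"
    and L: "c1 * ln (real n) \<le> real L" "L \<le> n"
    and k: "c3 * real L * ln (real n) \<le> real k" "real k \<le> C * ln (real n) ^ 2"
  shows "expected_evals n L k \<le> ennreal (evals_const c1 c3 C * real n * ln (ln (real n)))"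
proof -
  have L8: "8 \<le> L"
    using large(3) L(1) by linarith
  have "c3 * (c1 * ln (real n)) * ln (real n) \<le> c3 * real L * ln (real n)"
    using L(1) c large(1) by (intro mult_right_mono mult_left_mono) auto
  moreover have "4 * exp 1 * ln (real n) \<le> c1 * c3 * ln (real n) * ln (real n)"
    using large(1,4) by (intro mult_right_mono) auto
  ultimately have k_large: "4 * exp 1 * ln (real n) \<le> real k"
    using k(1) by (simp add: mult_ac)
  have "4 * exp 1 * 1 \<le> 4 * exp 1 * ln (real n)"
    using large(1) by (intro mult_left_mono) auto
  moreover have "3 \<le> 4 * exp (1::real)"
    using exp_ge_add_one_self[of 1] by simp
  ultimately have k3: "3 \<le> k"
    using k_large by linarith
  have "2 * real k \<le> exp 1 * real n"
    using k(2) large(5) by linarith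
  moreover have "exp 1 * real n * ln (real n * real L) / real k + 1 \<le> real n"
  proof -
    have n: "3 \<le> real n"
      using L8 L(2) by simp
    have "ln (real n * real L) \<le> 2 * ln (real n)"
      using L8 L(2) by (simp add: ln_mult)
    then have "exp 1 * real n * ln (real n * real L) / real k \<le> exp 1 * real n * (2 * ln (real n)) / (4 * exp 1 * ln (real n))"
      using k_large large(1) n by (intro frac_le mult_left_mono) auto
    also have "\<dots> = real n / 2"
      using large(1) by (simp add: field_simps)
    finally show ?thesis
      using n by linarith
  qed
  ultimately have "expected_evals n L k \<le> ennreal (1 + exp 1 * real n * ln (2 * real k)
           + 4 / \<kappa> * (exp 1 * real n * real L * ln (real n * real L) / real k + real L + real n
                       + 4 * real n * (1 + ln (real n)) / real L))"
    by (rule expected_evals_le_explicit[OF L8 L(2) k3])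
  also have "\<dots> \<le> ennreal (evals_const c1 c3 C * real n * ln (ln (real n)))"
    by (intro ennreal_leI explicit_bound_le_n_lnln c large(1,2) L k)
  finally show ?thesis .
qed

section \<open>Asymptotics\<close>

lemma theta_parameter_bounds:
  fixes lam kk :: "nat \<Rightarrow> nat"
  assumes lam: "(\<lambda>n. real (lam n)) \<in> \<Theta>(\<lambda>n. ln (real n))"
    and k: "(\<lambda>n. real (kk n)) \<in> \<Theta>(\<lambda>n. real (lam n) * ln (real n))"
  obtains c1 c3 C :: real where "0 < c1" "0 < c3" "0 < C"
    and "\<forall>\<^sub>F n in at_top. c1 * ln (real n) \<le> real (lam n) \<and> c3 * real (lam n) * ln (real n) \<le> real (kk n)
                          \<and> real (kk n) \<le> C * ln (real n) ^ 2"
proof -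
  obtain c1 where c1: "0 < c1" "\<forall>\<^sub>F n in at_top. norm (real (lam n)) \<ge> c1 * norm (ln (real n))"
    using landau_omega.bigE[OF bigthetaD2[OF lam]] by blast
  obtain c2 where c2: "0 < c2" "\<forall>\<^sub>F n in at_top. norm (real (lam n)) \<le> c2 * norm (ln (real n))"
    using landau_o.bigE[OF bigthetaD1[OF lam]] by blast
  obtain c3 where c3: "0 < c3"
    "\<forall>\<^sub>F n in at_top. norm (real (kk n)) \<ge> c3 * norm (real (lam n) * ln (real n))"
    using landau_omega.bigE[OF bigthetaD2[OF k]] by blast
  obtain c4 where c4: "0 < c4"
    "\<forall>\<^sub>F n in at_top. norm (real (kk n)) \<le> c4 * norm (real (lam n) * ln (real n))"
    using landau_o.bigE[OF bigthetaD1[OF k]] by blast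
  have "\<forall>\<^sub>F n in at_top. c1 * ln (real n) \<le> real (lam n) \<and> c3 * real (lam n) * ln (real n) \<le> real (kk n)
                          \<and> real (kk n) \<le> c4 * c2 * ln (real n) ^ 2"
    using c1(2) c2(2) c3(2) c4(2) eventually_ge_at_top[of 1]
  proof eventually_elim
    case (elim n)
    then have ln: "0 \<le> ln (real n)"
      by simp
    have "c4 * (real (lam n) * ln (real n)) \<le> c4 * (c2 * ln (real n) * ln (real n))"
      using elim ln c4(1) by (intro mult_left_mono mult_right_mono) auto
    then show ?case
      using elim ln by (simp add: abs_mult power2_eq_square mult_ac)
  qed
  then show ?thesis
    using c1(1) c2(1) c3(1) c4(1) by (intro that[of c1 c3 "c4 * c2"]) auto
qed

lemma eventually_large_n:
  assumes c: "0 < c1" "0 < c3" "0 < C"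
  shows "\<forall>\<^sub>F n in at_top. 1 \<le> ln (real n) \<and> 1 \<le> ln (ln (real n)) \<and> 8 \<le> c1 * ln (real n)
           \<and> 4 * exp 1 \<le> c1 * c3 * ln (real n) \<and> 2 * C * ln (real n) ^ 2 \<le> exp 1 * real n"
proof -
  have "filterlim (\<lambda>n::nat. ln (real n)) at_top at_top" "filterlim (\<lambda>n::nat. ln (ln (real n))) at_top at_top"
    by real_asymp+
  then have ln: "\<forall>\<^sub>F n in at_top. M \<le> ln (real n)" and lnln: "\<forall>\<^sub>F n in at_top. M \<le> ln (ln (real n))"
    for M :: real
    by (simp_all add: filterlim_at_top)
  have small: "(\<lambda>n::nat. ln (real n) ^ 2) \<in> o(\<lambda>n. real n)"
    by real_asymp
  have "\<forall>\<^sub>F n in at_top. \<bar>ln (real n) ^ 2\<bar> \<le> exp 1 / (2 * C) * \<bar>real n\<bar>"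
    using landau_o.smallD[OF small, of "exp 1 / (2 * C)"] c by simp
  with ln[of 1] lnln[of 1] ln[of "8 / c1"] ln[of "4 * exp 1 / (c1 * c3)"] show ?thesis
  proof eventually_elim
    case (elim n)
    then show ?case
      using c by (auto simp: field_simps)
  qed
qed

theorem theorem5p1:
  fixes lam kk :: "nat \<Rightarrow> nat"
  assumes lam_range: "\<forall>n\<ge>1. 1 \<le> lam n \<and> lam n \<le> n"
    and lam_theta: "(\<lambda>n. real (lam n)) \<in> \<Theta>(\<lambda>n. ln (real n))"
    and k_pos: "\<forall>n. 0 < kk n"
    and k_theta: "(\<lambda>n. real (kk n)) \<in> \<Theta>(\<lambda>n. real (lam n) * ln (real n))"
  shows "\<exists>C>0. \<forall>\<^sub>F n in at_top.
           expected_evals n (lam n) (kk n) \<le> ennreal (C * real n * ln (ln (real n)))"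
proof -
  obtain c1 c3 C where c: "0 < c1" "0 < c3" "0 < C"
    and params: "\<forall>\<^sub>F n in at_top. c1 * ln (real n) \<le> real (lam n)
                   \<and> c3 * real (lam n) * ln (real n) \<le> real (kk n) \<and> real (kk n) \<le> C * ln (real n) ^ 2"
    using theta_parameter_bounds[OF lam_theta k_theta] by blast
  have "\<forall>\<^sub>F n in at_top. expected_evals n (lam n) (kk n) \<le> ennreal (evals_const c1 c3 C * real n * ln (ln (real n)))"
    using params eventually_large_n[OF c] eventually_ge_at_top[of 1]
  proof eventually_elim
    case (elim n)
    then show ?case
      using lam_range by (intro expected_evals_le_n_lnln[OF c]) auto
  qed
  moreover have "0 < evals_const c1 c3 C"
    using c \<kappa>_pos by (simp add: evals_const_def add_pos_nonneg)
  ultimately show ?thesis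
    by blast
qed

end
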